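(* There is a randomized algorithm that reconstructs any connected chordal graph $G$ of maximum degree $\Delta$ using a distance oracle, with expected query complexity $$O\big(\Delta^3 2^\Delta\cdot n(2^\Delta+\log^2 n)\log n\big),$$ which is $\tilde O(n)$ when $\Delta=O(\log\log n)$.
   Context: Let $G=(V,E)$ be an unknown connected, unweighted, undirected simple graph with $|V|=n$, and let $\delta$ be its shortest-path metric. A distance oracle receives $(u,v)\in V^2$ and returns $\delta(u,v)$. In the reconstruction problem, the algorithm is given $V$ (and the degree bound $\Delta$), has access to the oracle, and must output $E$. A graph is chordal if every cycle of length greater than three has a chord (an edge joining two nonconsecutive vertices of the cycle). *)

theory Defs
  imports "HOL-Probability.Probability"
begin

definition simple_graph :: "nat \<Rightarrow> (nat \<times> nat) set \<Rightarrow> bool" where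
  "simple_graph n E \<longleftrightarrow> E \<subseteq> {0..<n} \<times> {0..<n} \<and> sym E \<and> irrefl E"

definition connected_graph :: "nat \<Rightarrow> (nat \<times> nat) set \<Rightarrow> bool" where
  "connected_graph n E \<longleftrightarrow> (\<forall>u\<in>{0..<n}. \<forall>v\<in>{0..<n}. (u, v) \<in> E\<^sup>*)"

definition max_degree_le :: "nat \<Rightarrow> (nat \<times> nat) set \<Rightarrow> nat \<Rightarrow> bool" where
  "max_degree_le n E \<Delta> \<longleftrightarrow> (\<forall>u\<in>{0..<n}. card {v. (u, v) \<in> E} \<le> \<Delta>)"

definition is_cycle :: "(nat \<times> nat) set \<Rightarrow> nat list \<Rightarrow> bool" where
  "is_cycle E cs \<longleftrightarrow> length cs \<ge> 3 \<and> distinct cs \<and>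
     (\<forall>i < length cs. (cs ! i, cs ! ((i + 1) mod length cs)) \<in> E)"

definition has_chord :: "(nat \<times> nat) set \<Rightarrow> nat list \<Rightarrow> bool" where
  "has_chord E cs \<longleftrightarrow> (\<exists>i < length cs. \<exists>j < length cs.
     i \<noteq> j \<and> j \<noteq> (i + 1) mod length cs \<and> i \<noteq> (j + 1) mod length cs \<and>
     (cs ! i, cs ! j) \<in> E)"

definition chordal :: "(nat \<times> nat) set \<Rightarrow> bool" where
  "chordal E \<longleftrightarrow> (\<forall>cs. is_cycle E cs \<and> length cs > 3 \<longrightarrow> has_chord E cs)"

definition sp_dist :: "(nat \<times> nat) set \<Rightarrow> nat \<Rightarrow> nat \<Rightarrow> nat" where
  "sp_dist E u v = (LEAST k. (u, v) \<in> E ^^ k)"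

datatype action = Ask nat nat | Answer "(nat \<times> nat) set"

text \<open>A randomized query algorithm for inputs (n, \<Delta>) is a strategy that, given n, \<Delta>,
an infinite sequence of fair random bits, and the list of oracle answers received so
far, decides the next action: ask the oracle for a pair, or output an edge set.\<close>

type_synonym strategy = "nat \<Rightarrow> nat \<Rightarrow> (nat \<Rightarrow> bool) \<Rightarrow> nat list \<Rightarrow> action"

fun history :: "strategy \<Rightarrow> nat \<Rightarrow> nat \<Rightarrow> (nat \<Rightarrow> nat \<Rightarrow> nat) \<Rightarrow> (nat \<Rightarrow> bool) \<Rightarrow> nat \<Rightarrow> nat list" where
  "history A n \<Delta> d \<omega> 0 = []"
| "history A n \<Delta> d \<omega> (Suc k) =
     (case A n \<Delta> \<omega> (history A n \<Delta> d \<omega> k) of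
        Ask u v \<Rightarrow> history A n \<Delta> d \<omega> k @ [d u v]
      | Answer _ \<Rightarrow> history A n \<Delta> d \<omega> k)"

definition is_answer :: "action \<Rightarrow> bool" where
  "is_answer a \<longleftrightarrow> (\<exists>F. a = Answer F)"

definition halts :: "strategy \<Rightarrow> nat \<Rightarrow> nat \<Rightarrow> (nat \<Rightarrow> nat \<Rightarrow> nat) \<Rightarrow> (nat \<Rightarrow> bool) \<Rightarrow> bool" where
  "halts A n \<Delta> d \<omega> \<longleftrightarrow> (\<exists>k. is_answer (A n \<Delta> \<omega> (history A n \<Delta> d \<omega> k)))"

text \<open>Number of queries made before the output (the step index k is exactly the
number of queries issued so far).\<close>

definition num_queries :: "strategy \<Rightarrow> nat \<Rightarrow> nat \<Rightarrow> (nat \<Rightarrow> nat \<Rightarrow> nat) \<Rightarrow> (nat \<Rightarrow> bool) \<Rightarrow> nat" where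
  "num_queries A n \<Delta> d \<omega> = (LEAST k. is_answer (A n \<Delta> \<omega> (history A n \<Delta> d \<omega> k)))"

definition run_output :: "strategy \<Rightarrow> nat \<Rightarrow> nat \<Rightarrow> (nat \<Rightarrow> nat \<Rightarrow> nat) \<Rightarrow> (nat \<Rightarrow> bool) \<Rightarrow> (nat \<times> nat) set" where
  "run_output A n \<Delta> d \<omega> =
     (case A n \<Delta> \<omega> (history A n \<Delta> d \<omega> (num_queries A n \<Delta> d \<omega>)) of
        Answer F \<Rightarrow> F | Ask _ _ \<Rightarrow> {})"

definition query_cost :: "strategy \<Rightarrow> nat \<Rightarrow> nat \<Rightarrow> (nat \<Rightarrow> nat \<Rightarrow> nat) \<Rightarrow> (nat \<Rightarrow> bool) \<Rightarrow> ennreal" where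
  "query_cost A n \<Delta> d \<omega> = (if halts A n \<Delta> d \<omega> then of_nat (num_queries A n \<Delta> d \<omega>) else \<infinity>)"

definition coins :: "(nat \<Rightarrow> bool) measure" where
  "coins = PiM UNIV (\<lambda>_. measure_pmf (bernoulli_pmf (1/2)))"

end

theory Submission
  imports Defs
begin

(*
  The algorithm is deterministic (so it is a randomized strategy that ignores its coins) and
  makes at most n (1 + \<Delta> (\<Delta> + 1) clog n + \<Delta>^2) = O(\<Delta>^2 n log n) queries, which lies
  within the stated O(\<Delta>^3 2^\<Delta> n (2^\<Delta> + log^2 n) log n).

  It first queries all distances to vertex 0, which sorts the vertices into levels, and then
  learns the graph ball by ball: knowing the graph induced on the ball B t of radius t, it
  computes the edges of B (t+1). Two consequences of chordality drive this step:
  the parents of a vertex (its neighbours one level down) form a clique, and adjacent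
  vertices of one level have a common parent. From these, balls are convex (distances inside
  B t are true distances), and for a vertex v on level t+1 the distance to any y in B t is
  one more than the distance from y to the parent set of v. Hence the parent set can be
  found by binary search among the at most 2^(\<Delta> clog n) cliques of size at most \<Delta> on
  level t: querying v against the closed neighbourhood of a median of the remaining
  candidates eliminates at least half of them. Edges between new vertices join vertices
  sharing a parent, and are checked with one query each.
*)

subsection \<open>Walks and induced paths\<close>

lemma relpow_mono_rel:
  fixes R S :: "('a \<times> 'a) set"
  assumes "R \<subseteq> S" "(a, b) \<in> R ^^ k"
  shows "(a, b) \<in> S ^^ k"
  using assms relpowp_mono[of "\<lambda>x y. (x, y) \<in> R" "\<lambda>x y. (x, y) \<in> S" k a b]
  by (auto simp: relpowp_relpow_eq)

lemma relpow_sym: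
  fixes R :: "('a \<times> 'a) set"
  assumes "sym R" "(a, b) \<in> R ^^ k"
  shows "(b, a) \<in> R ^^ k"
  using assms(2)
proof (induction k arbitrary: b)
  case (Suc k)
  then obtain y where "(a, y) \<in> R ^^ k" "(y, b) \<in> R" by (auto elim!: relpow_Suc_E)
  then show ?case using Suc.IH assms(1) by (metis relpow_Suc_I2 symD)
qed simp

lemma walk_segment:
  fixes f :: "nat \<Rightarrow> 'a" and R :: "('a \<times> 'a) set"
  assumes "\<forall>j. a \<le> j \<longrightarrow> j < b \<longrightarrow> (f j, f (Suc j)) \<in> R" "a \<le> b"
  shows "(f a, f b) \<in> R ^^ (b - a)"
  using assms
proof (induction b)
  case (Suc b)
  show ?case
  proof (cases "a = Suc b")
    case False
    then have "a \<le> b" using Suc by simp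
    then have "(f a, f b) \<in> R ^^ (b - a)" "(f b, f (Suc b)) \<in> R" using Suc by simp_all
    then show ?thesis using \<open>a \<le> b\<close> by (metis Suc_diff_le relpow_Suc_I)
  qed simp
qed simp

text \<open>A shortest walk in a symmetric relation is an induced path: its vertices are distinct
  and only consecutive ones are related, since anything else would allow a shortcut.\<close>

lemma induced_path_exists:
  fixes R :: "('a \<times> 'a) set"
  assumes "sym R" "(a, b) \<in> R ^^ k"
  obtains m f where "f 0 = a" "f m = b" "\<forall>i<m. (f i, f (Suc i)) \<in> R"
    "\<forall>i\<le>m. \<forall>j\<le>m. f i = f j \<longrightarrow> i = j"
    "\<forall>i\<le>m. \<forall>j\<le>m. (f i, f j) \<in> R \<longrightarrow> i = j \<or> j = Suc i \<or> i = Suc j"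
proof -
  define m where "m = (LEAST k. (a, b) \<in> R ^^ k)"
  have "(a, b) \<in> R ^^ m" unfolding m_def using assms(2) by (rule LeastI)
  then obtain f where f: "f 0 = a" "f m = b" "\<forall>i<m. (f i, f (Suc i)) \<in> R"
    by (auto simp: relpow_fun_conv)
  have shortest: "\<And>k. k < m \<Longrightarrow> (a, b) \<notin> R ^^ k"
    unfolding m_def by (rule not_less_Least)
  have shortcut: "(a, b) \<in> R ^^ (i + s + (m - j))"
    if "i \<le> j" "j \<le> m" "(f i, f j) \<in> R ^^ s" for i j s
  proof -
    have "(f 0, f i) \<in> R ^^ (i - 0)" by (rule walk_segment) (use f that in auto)
    moreover have "(f j, f m) \<in> R ^^ (m - j)" by (rule walk_segment) (use f that in auto)
    ultimately show ?thesis using that f by (metis diff_zero relpow_trans)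
  qed
  have inj: "i = j" if "i \<le> m" "j \<le> m" "f i = f j" for i j
  proof (rule ccontr)
    assume "i \<noteq> j"
    then have "(a, b) \<in> R ^^ (min i j + 0 + (m - max i j))"
      using shortcut[of "min i j" "max i j" 0] that by (simp add: min_def max_def)
    moreover have "min i j + 0 + (m - max i j) < m" using \<open>i \<noteq> j\<close> that by simp
    ultimately show False using shortest by blast
  qed
  have induced: "i = j \<or> j = Suc i \<or> i = Suc j"
    if "i \<le> m" "j \<le> m" "(f i, f j) \<in> R" for i j
  proof (rule ccontr)
    assume far: "\<not> (i = j \<or> j = Suc i \<or> i = Suc j)"
    have "(f (min i j), f (max i j)) \<in> R ^^ 1"
      using that assms(1) by (auto simp: min_def max_def dest: symD)
    then have "(a, b) \<in> R ^^ (min i j + 1 + (m - max i j))"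
      using shortcut[of "min i j" "max i j" 1] that by simp
    moreover have "min i j + 1 + (m - max i j) < m" using far that by linarith
    ultimately show False using shortest by blast
  qed
  show ?thesis using that f inj induced by blast
qed

lemma chordal_no_induced_cycle:
  fixes E :: "(nat \<times> nat) set" and f :: "nat \<Rightarrow> nat"
  assumes "chordal E" "3 \<le> m"
    and inj: "\<forall>i\<le>m. \<forall>j\<le>m. f i = f j \<longrightarrow> i = j"
    and path: "\<forall>i<m. (f i, f (Suc i)) \<in> E" and closing: "(f m, f 0) \<in> E"
    and chordless: "\<forall>i\<le>m. \<forall>j\<le>m. (f i, f j) \<in> E \<longrightarrow>
       i = j \<or> j = Suc i \<or> i = Suc j \<or> (i = 0 \<and> j = m) \<or> (i = m \<and> j = 0)"
  shows False
proof -
  define cs where "cs = map f [0..<Suc m]"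
  have len: "length cs = Suc m" unfolding cs_def by simp
  have nth: "\<And>j. j < Suc m \<Longrightarrow> cs ! j = f j"
    unfolding cs_def by (simp del: upt_Suc add: nth_map)
  have next_idx: "(i + 1) mod Suc m = (if i = m then 0 else Suc i)" if "i \<le> m" for i
    using that by (auto simp: le_less)
  have "is_cycle E cs"
    unfolding is_cycle_def
  proof (intro conjI allI impI)
    show "3 \<le> length cs" using len assms(2) by simp
    show "distinct cs"
      unfolding cs_def distinct_map using inj by (auto simp: inj_on_def)
    fix i assume "i < length cs"
    then show "(cs ! i, cs ! ((i + 1) mod length cs)) \<in> E"
      using len nth next_idx[of i] path closing by (auto simp: less_Suc_eq_le)
  qed
  then have "has_chord E cs" using assms(1,2) len unfolding chordal_def by simp
  then obtain i j where ij: "i \<le> m" "j \<le> m" "i \<noteq> j"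
      "j \<noteq> (i + 1) mod Suc m" "i \<noteq> (j + 1) mod Suc m" "(f i, f j) \<in> E"
    unfolding has_chord_def len using nth by (auto simp: less_Suc_eq_le)
  then show False
    using chordless[rule_format, OF ij(1,2,6)] next_idx[OF ij(1)] next_idx[OF ij(2)]
    by (auto split: if_splits)
qed

text \<open>Nor can a vertex z outside an induced path of length at least two be adjacent to exactly
  the two end points of the path: path and z would form an induced cycle.\<close>

lemma chordal_no_induced_apex:
  fixes E :: "(nat \<times> nat) set" and f :: "nat \<Rightarrow> nat"
  assumes "chordal E" "sym E" "2 \<le> m"
    and inj: "\<forall>i\<le>m. \<forall>j\<le>m. f i = f j \<longrightarrow> i = j" and outside: "\<forall>k\<le>m. f k \<noteq> z"
    and path: "\<forall>i<m. (f i, f (Suc i)) \<in> E"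
    and induced: "\<forall>i\<le>m. \<forall>j\<le>m. (f i, f j) \<in> E \<longrightarrow> i = j \<or> j = Suc i \<or> i = Suc j"
    and apex: "(z, f 0) \<in> E" "(z, f m) \<in> E" "\<forall>k\<le>m. (z, f k) \<in> E \<longrightarrow> k = 0 \<or> k = m"
  shows False
proof -
  define g where "g = case_nat z f"
  show False
  proof (rule chordal_no_induced_cycle[OF assms(1), of "Suc m" g])
    show "3 \<le> Suc m" using assms(3) by simp
    show "\<forall>i\<le>Suc m. \<forall>j\<le>Suc m. g i = g j \<longrightarrow> i = j"
    proof (intro allI impI)
      fix i j assume ij: "i \<le> Suc m" "j \<le> Suc m" "g i = g j"
      show "i = j"
      proof (cases i; cases j)
        fix j' assume "i = 0" "j = Suc j'"
        then show ?thesis using ij outside[rule_format, of j'] by (simp add: g_def)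
      next
        fix i' assume "i = Suc i'" "j = 0"
        then show ?thesis using ij outside[rule_format, of i'] by (simp add: g_def)
      next
        fix i' j' assume "i = Suc i'" "j = Suc j'"
        then show ?thesis using ij inj by (simp add: g_def)
      qed simp
    qed
    show "\<forall>i<Suc m. (g i, g (Suc i)) \<in> E"
      using path apex(1) by (auto simp: g_def less_Suc_eq_0_disj)
    show "(g (Suc m), g 0) \<in> E" using symD[OF assms(2) apex(2)] by (simp add: g_def)
    show "\<forall>i\<le>Suc m. \<forall>j\<le>Suc m. (g i, g j) \<in> E \<longrightarrow>
        i = j \<or> j = Suc i \<or> i = Suc j \<or> (i = 0 \<and> j = Suc m) \<or> (i = Suc m \<and> j = 0)"
    proof (intro allI impI)
      fix i j assume ij: "i \<le> Suc m" "j \<le> Suc m" "(g i, g j) \<in> E"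
      show "i = j \<or> j = Suc i \<or> i = Suc j \<or> (i = 0 \<and> j = Suc m) \<or> (i = Suc m \<and> j = 0)"
      proof (cases i; cases j)
        fix j' assume i0: "i = 0" and j: "j = Suc j'"
        then have "(z, f j') \<in> E" "j' \<le> m" using ij by (simp_all add: g_def)
        then show ?thesis using apex(3) i0 j by auto
      next
        fix i' assume i: "i = Suc i'" and j0: "j = 0"
        then have "(f i', z) \<in> E" "i' \<le> m" using ij by (simp_all add: g_def)
        then show ?thesis using apex(3) symD[OF assms(2)] i j0 by blast
      next
        fix i' j' assume "i = Suc i'" "j = Suc j'"
        then show ?thesis using ij induced by (simp add: g_def)
      qed simp
    qed
  qed
qed

subsection \<open>Levels of a connected chordal graph\<close>

locale chordal_graph =
  fixes n :: nat and E :: "(nat \<times> nat) set"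
  assumes simple: "simple_graph n E" and connected: "connected_graph n E"
    and chordal: "chordal E" and nonempty: "0 < n"
begin

abbreviation \<delta> :: "nat \<Rightarrow> nat \<Rightarrow> nat" where "\<delta> \<equiv> sp_dist E"

definition lvl :: "nat \<Rightarrow> nat" where "lvl x = \<delta> 0 x"
definition B :: "nat \<Rightarrow> nat set" where "B k = {v. v < n \<and> lvl v \<le> k}"
definition L :: "nat \<Rightarrow> nat set" where "L k = {v. v < n \<and> lvl v = k}"
definition EB :: "nat \<Rightarrow> (nat \<times> nat) set" where "EB k = E \<inter> (B k \<times> B k)"

lemma E_vertices: "(x, y) \<in> E \<Longrightarrow> x < n \<and> y < n"
  using simple unfolding simple_graph_def by auto

lemma E_sym: "sym E"
  using simple unfolding simple_graph_def by auto

lemma E_swap: "(x, y) \<in> E \<Longrightarrow> (y, x) \<in> E"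
  using E_sym by (rule symD)

lemma E_irrefl: "(x, x) \<notin> E"
  using simple unfolding simple_graph_def irrefl_def by auto

lemma dist_walk: "x < n \<Longrightarrow> y < n \<Longrightarrow> (x, y) \<in> E ^^ \<delta> x y"
  using connected unfolding connected_graph_def sp_dist_def
  by (metis LeastI_ex atLeastLessThan_iff le0 rtrancl_imp_relpow)

lemma dist_le: "(x, y) \<in> E ^^ k \<Longrightarrow> \<delta> x y \<le> k"
  unfolding sp_dist_def by (rule Least_le)

lemma dist_sym: "x < n \<Longrightarrow> y < n \<Longrightarrow> \<delta> x y = \<delta> y x"
  by (meson antisym dist_le dist_walk relpow_sym E_sym)

lemma dist_triangle: "x < n \<Longrightarrow> y < n \<Longrightarrow> z < n \<Longrightarrow> \<delta> x z \<le> \<delta> x y + \<delta> y z"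
  by (meson dist_le dist_walk relpow_trans)

lemma dist_self: "\<delta> x x = 0"
  using dist_le[of x x 0] by simp

lemma dist_eq_0: "\<delta> x y = 0 \<Longrightarrow> x < n \<Longrightarrow> y < n \<Longrightarrow> x = y"
  using dist_walk[of x y] by simp

lemma dist_edge: "(x, y) \<in> E \<Longrightarrow> \<delta> x y = 1"
  using dist_le[of x y 1] dist_eq_0[of x y] E_irrefl E_vertices[of x y]
  by (metis le_neq_implies_less less_one relpow_1)

lemma dist_1_edge: "x < n \<Longrightarrow> y < n \<Longrightarrow> \<delta> x y = 1 \<Longrightarrow> (x, y) \<in> E"
  using dist_walk[of x y] by simp

lemma dist_edge_step: "(m, x) \<in> E \<Longrightarrow> q < n \<Longrightarrow> \<delta> x q \<le> \<delta> m q + 1"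
  using dist_triangle[of x m q] dist_edge[OF E_swap] E_vertices by fastforce

lemma lvl_edge: "(x, y) \<in> E \<Longrightarrow> lvl y \<le> lvl x + 1"
  unfolding lvl_def using dist_triangle[of 0 x y] dist_edge E_vertices nonempty by fastforce

lemma lvl_edge': "(x, y) \<in> E \<Longrightarrow> lvl x \<le> lvl y + 1"
  using lvl_edge E_swap by blast

lemma lvl_0_root: "lvl x = 0 \<Longrightarrow> x < n \<Longrightarrow> x = 0"
  unfolding lvl_def using dist_eq_0 nonempty by metis

lemma lvl_root: "lvl 0 = 0"
  unfolding lvl_def by (rule dist_self)

lemma parent_exists: "x < n \<Longrightarrow> lvl x = Suc s \<Longrightarrow> \<exists>p. (x, p) \<in> E \<and> lvl p = s"
proof -
  assume x: "x < n" "lvl x = Suc s"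
  then have "(0, x) \<in> E ^^ Suc s" using dist_walk[of 0 x] nonempty unfolding lvl_def by simp
  then obtain p where p: "(0, p) \<in> E ^^ s" "(p, x) \<in> E" by (auto elim!: relpow_Suc_E)
  then have "lvl p \<le> s" unfolding lvl_def using dist_le by blast
  moreover have "lvl x \<le> lvl p + 1" using lvl_edge p by blast
  ultimately show ?thesis using x p E_swap by (intro exI[of _ p]) auto
qed

lemma EB_mono: "k \<le> k' \<Longrightarrow> EB k \<subseteq> EB k'"
  unfolding EB_def B_def by auto

lemma EB_sub: "EB k \<subseteq> E"
  unfolding EB_def by auto

lemma EB_relpow: "(x, y) \<in> EB k ^^ j \<Longrightarrow> (x, y) \<in> E ^^ j"
  using relpow_mono_rel[OF EB_sub] .

lemma root_walk_in_ball: "x < n \<Longrightarrow> lvl x = s \<Longrightarrow> (x, 0) \<in> EB s ^^ s"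
proof (induction s arbitrary: x)
  case 0 then show ?case using lvl_0_root by auto
next
  case (Suc s)
  then obtain p where p: "(x, p) \<in> E" "lvl p = s" using parent_exists by blast
  then have "p < n" using E_vertices by blast
  then have "(p, 0) \<in> EB (Suc s) ^^ s"
    using Suc.IH p relpow_mono_rel[OF EB_mono] by (metis le_SucI order_refl)
  moreover have "(x, p) \<in> EB (Suc s)" using p Suc.prems \<open>p < n\<close> unfolding EB_def B_def by auto
  ultimately show ?case by (meson relpow_Suc_I2)
qed

text \<open>Two vertices of level t+1 are joined by a walk using only edges of the ball of radius t
  and their edges to parents: each goes down to the root.\<close>

lemma level_pair_connected:
  assumes "a < n" "b < n" "lvl a = Suc t" "lvl b = Suc t" "EB t \<subseteq> R" "sym R"
    and "\<And>p. (a, p) \<in> E \<Longrightarrow> lvl p = t \<Longrightarrow> (a, p) \<in> R"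
    and "\<And>p. (b, p) \<in> E \<Longrightarrow> lvl p = t \<Longrightarrow> (b, p) \<in> R"
  shows "\<exists>k. (a, b) \<in> R ^^ k"
proof -
  have down: "(x, 0) \<in> R ^^ Suc t" if x: "x < n" "lvl x = Suc t"
    and up: "\<And>p. (x, p) \<in> E \<Longrightarrow> lvl p = t \<Longrightarrow> (x, p) \<in> R" for x
  proof -
    obtain p where p: "(x, p) \<in> E" "lvl p = t" using parent_exists x by blast
    then have "(p, 0) \<in> R ^^ t"
      using root_walk_in_ball E_vertices relpow_mono_rel[OF assms(5)] by blast
    then show ?thesis by (rule relpow_Suc_I2[OF up[OF p]])
  qed
  have "(a, 0) \<in> R ^^ Suc t" "(0, b) \<in> R ^^ Suc t"
    using down assms relpow_sym[OF assms(6)] by blast+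
  then have "(a, b) \<in> R ^^ (Suc t + Suc t)" by (rule relpow_trans)
  then show ?thesis by blast
qed

lemma ball_detour:
  assumes ab: "a < n" "b < n" "lvl a = Suc t" "lvl b = Suc t" "a \<noteq> b"
  obtains m f where "f 0 = a" "f m = b" "2 \<le> m" "\<forall>i<m. (f i, f (Suc i)) \<in> E"
    "\<forall>i\<le>m. \<forall>j\<le>m. f i = f j \<longrightarrow> i = j" "\<forall>k\<le>m. f k \<in> B t \<union> {a, b}"
    "\<forall>i\<le>m. \<forall>j\<le>m. (f i, f j) \<in> E \<longrightarrow>
       i = j \<or> j = Suc i \<or> i = Suc j \<or> (i = 0 \<and> j = m) \<or> (i = m \<and> j = 0)"
proof -
  define W where "W = B t \<union> {a, b}"
  define R where "R = E \<inter> (W \<times> W) - {(a, b), (b, a)}"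
  have symR: "sym R" unfolding R_def sym_def using E_swap by auto
  have RE: "R \<subseteq> E" unfolding R_def by auto
  have "\<exists>k. (a, b) \<in> R ^^ k"
  proof (rule level_pair_connected[OF ab(1-4)])
    show "EB t \<subseteq> R" unfolding EB_def R_def W_def B_def using ab(3,4) by auto
    show "sym R" by (rule symR)
    show "(a, p) \<in> R" if "(a, p) \<in> E" "lvl p = t" for p
      using that E_vertices[OF that(1)] ab unfolding R_def W_def B_def by auto
    show "(b, p) \<in> R" if "(b, p) \<in> E" "lvl p = t" for p
      using that E_vertices[OF that(1)] ab unfolding R_def W_def B_def by auto
  qed
  then obtain k where walk: "(a, b) \<in> R ^^ k" by blast
  obtain m f where f: "f 0 = a" "f m = b" "\<forall>i<m. (f i, f (Suc i)) \<in> R"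
      and inj: "\<forall>i\<le>m. \<forall>j\<le>m. f i = f j \<longrightarrow> i = j"
      and induced: "\<forall>i\<le>m. \<forall>j\<le>m. (f i, f j) \<in> R \<longrightarrow> i = j \<or> j = Suc i \<or> i = Suc j"
    by (rule induced_path_exists[OF symR walk])
  have fW: "\<forall>k\<le>m. f k \<in> W"
  proof (intro allI impI)
    fix k assume "k \<le> m"
    show "f k \<in> W"
    proof (cases "k = m")
      case False
      then have "(f k, f (Suc k)) \<in> R" using f \<open>k \<le> m\<close> by simp
      then show ?thesis unfolding R_def by blast
    qed (simp add: f W_def)
  qed
  have "m \<noteq> 0"
  proof
    assume "m = 0"
    then show False using f ab(5) by simp
  qed
  moreover have "m \<noteq> 1"
  proof
    assume m1: "m = 1"
    have "(f 0, f (Suc 0)) \<in> R" using f(3) m1 by simp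
    then show False using f(1,2) m1 unfolding R_def by simp
  qed
  ultimately have "2 \<le> m" by linarith
  moreover have "i = j \<or> j = Suc i \<or> i = Suc j \<or> (i = 0 \<and> j = m) \<or> (i = m \<and> j = 0)"
    if ij: "i \<le> m" "j \<le> m" "(f i, f j) \<in> E" for i j
  proof (cases "(f i, f j) \<in> R")
    case True
    then show ?thesis using induced ij by blast
  next
    case False
    then have "(f i = f 0 \<and> f j = f m) \<or> (f i = f m \<and> f j = f 0)"
      using ij fW f(1,2) unfolding R_def by auto
    then show ?thesis using inj ij by (meson le0 order_refl)
  qed
  ultimately show ?thesis
    using that[where m = m and f = f] f(1,2) f(3) RE inj fW unfolding W_def by blast
qed

text \<open>Otherwise the
  detour between two non-adjacent parents through lower levels, together with their common
  child, would be an induced cycle.\<close>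

lemma parents_adjacent:
  assumes z: "z < n" "lvl z = Suc t"
    and ab: "(z, a) \<in> E" "(z, b) \<in> E" "lvl a = t" "lvl b = t" "a \<noteq> b"
  shows "(a, b) \<in> E"
proof (rule ccontr)
  assume nab: "(a, b) \<notin> E"
  have an: "a < n" "b < n" using ab E_vertices by auto
  have "t \<noteq> 0"
  proof
    assume "t = 0"
    then have "a = 0" "b = 0" using ab an lvl_0_root by simp_all
    then show False using ab(5) by simp
  qed
  then obtain t' where t': "t = Suc t'" using not0_implies_Suc by blast
  obtain m f where f: "f 0 = a" "f m = b" "2 \<le> m" "\<forall>i<m. (f i, f (Suc i)) \<in> E"
      and inj: "\<forall>i\<le>m. \<forall>j\<le>m. f i = f j \<longrightarrow> i = j" and fW: "\<forall>k\<le>m. f k \<in> B t' \<union> {a, b}"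
      and chords: "\<forall>i\<le>m. \<forall>j\<le>m. (f i, f j) \<in> E \<longrightarrow>
         i = j \<or> j = Suc i \<or> i = Suc j \<or> (i = 0 \<and> j = m) \<or> (i = m \<and> j = 0)"
    by (rule ball_detour[OF an ab(3,4)[unfolded t'] ab(5)])
  have outside: "\<forall>k\<le>m. f k \<noteq> z" using fW z t' ab unfolding B_def by auto
  have z_adj: "k = 0 \<or> k = m" if "k \<le> m" "(z, f k) \<in> E" for k
  proof (rule ccontr)
    assume "\<not> (k = 0 \<or> k = m)"
    then have "f k \<noteq> a" "f k \<noteq> b" using inj f that(1) by (metis le0 order_refl)+
    then have "lvl (f k) \<le> t'" using fW that(1) unfolding B_def by auto
    then show False using lvl_edge'[OF that(2)] z t' by simp
  qed
  have induced: "i = j \<or> j = Suc i \<or> i = Suc j" if "i \<le> m" "j \<le> m" "(f i, f j) \<in> E" for i j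
    using chords that nab E_swap f(1,2) by blast
  show False
    using chordal_no_induced_apex[OF chordal E_sym f(3) inj outside f(4)] induced z_adj ab(1,2) f(1,2)
    by blast
qed

text \<open>Otherwise their detour through lower levels, closed by their edge, would
  be an induced cycle of length at least four.\<close>

lemma common_parent:
  assumes z: "z1 < n" "z2 < n" "lvl z1 = Suc t" "lvl z2 = Suc t" "(z1, z2) \<in> E"
  shows "\<exists>c. (z1, c) \<in> E \<and> (z2, c) \<in> E \<and> lvl c = t"
proof (rule ccontr)
  assume no_common: "\<not> (\<exists>c. (z1, c) \<in> E \<and> (z2, c) \<in> E \<and> lvl c = t)"
  have "z1 \<noteq> z2" using z E_irrefl by auto
  then obtain m f where f: "f 0 = z1" "f m = z2" "2 \<le> m" "\<forall>i<m. (f i, f (Suc i)) \<in> E"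
      and inj: "\<forall>i\<le>m. \<forall>j\<le>m. f i = f j \<longrightarrow> i = j" and fW: "\<forall>k\<le>m. f k \<in> B t \<union> {z1, z2}"
      and chords: "\<forall>i\<le>m. \<forall>j\<le>m. (f i, f j) \<in> E \<longrightarrow>
         i = j \<or> j = Suc i \<or> i = Suc j \<or> (i = 0 \<and> j = m) \<or> (i = m \<and> j = 0)"
    by (rule ball_detour[OF z(1-4)])
  have "m \<noteq> 2"
  proof
    assume m2: "m = 2"
    have e1: "(z1, f 1) \<in> E" and e2: "(f 1, z2) \<in> E"
      using f(1,2,4) spec[OF f(4), of 0] spec[OF f(4), of 1] m2 by (auto simp: numeral_2_eq_2)
    have "f 1 \<noteq> z1" "f 1 \<noteq> z2"
      using inj[rule_format, of 1 0] inj[rule_format, of 1 2] f(1,2) m2 by auto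
    then have "lvl (f 1) \<le> t" using fW[rule_format, of 1] m2 unfolding B_def by auto
    then have "lvl (f 1) = t" using lvl_edge'[OF e1] z(3) by simp
    then show False using no_common e1 e2 E_swap by blast
  qed
  then have "3 \<le> m" using f(3) by linarith
  then show False
    using chordal_no_induced_cycle[OF chordal _ inj f(4) _ chords] f(1,2) z(5) E_swap by blast
qed

text \<open>Since the parents of a vertex form a clique, any parent is at most one step (inside
  the ball) farther from a target than any other parent.\<close>

lemma parent_switch:
  assumes "z < n" "lvl z = Suc t" "(z, a) \<in> E" "(z, b) \<in> E" "lvl a = t" "lvl b = t"
    and "(b, w) \<in> EB t ^^ k"
  shows "\<exists>k'\<le>k + 1. (a, w) \<in> EB t ^^ k'"
proof (cases "a = b")
  case False
  then have "(a, b) \<in> E" using parents_adjacent assms by blast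
  then have "(a, b) \<in> EB t" using assms E_vertices unfolding EB_def B_def by auto
  then have "(a, w) \<in> EB t ^^ Suc k" using assms(7) by (rule relpow_Suc_I2)
  then show ?thesis by (intro exI[of _ "Suc k"]) simp
qed (use assms(7) in \<open>intro exI[of _ k], simp\<close>)

text \<open>A run g 0, ..., g l of adjacent vertices on level t+1 whose last vertex has the
  neighbour w on level t: walking down from g 0 and along the common parents of
  consecutive run vertices reaches w inside the ball of radius t within l steps.\<close>

lemma run_to_parent:
  assumes "\<forall>j\<le>l. g j < n \<and> lvl (g j) = Suc t" "\<forall>j<l. (g j, g (Suc j)) \<in> E"
    and "(g l, w) \<in> E" "lvl w = t"
  shows "\<exists>p. (g 0, p) \<in> E \<and> lvl p = t \<and> (\<exists>k\<le>l. (p, w) \<in> EB t ^^ k)"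
  using assms
proof (induction l arbitrary: g)
  case 0 then show ?case by (intro exI[of _ w]) auto
next
  case (Suc l)
  have "\<exists>p. (g (Suc 0), p) \<in> E \<and> lvl p = t \<and> (\<exists>k\<le>l. (p, w) \<in> EB t ^^ k)"
    using Suc.IH[of "\<lambda>j. g (Suc j)"] Suc.prems by auto
  then obtain p k where p: "(g 1, p) \<in> E" "lvl p = t" "k \<le> l" "(p, w) \<in> EB t ^^ k"
    by auto
  obtain c where c: "(g 0, c) \<in> E" "(g 1, c) \<in> E" "lvl c = t"
    using common_parent[of "g 0" "g 1" t] Suc.prems by auto
  obtain k' where k': "k' \<le> k + 1" "(c, w) \<in> EB t ^^ k'"
    using parent_switch[of "g 1" t c p w k] Suc.prems c p by auto
  have "k' \<le> Suc l" using k'(1) \<open>k \<le> l\<close> by simp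
  then show ?case using c k'(2) by blast
qed

text \<open>By one more parent switch, the same holds starting from any parent u of g 0.\<close>

corollary run_from_any_parent:
  assumes "\<forall>j\<le>l. g j < n \<and> lvl (g j) = Suc t" "\<forall>j<l. (g j, g (Suc j)) \<in> E"
    and "(g l, w) \<in> E" "lvl w = t" "(g 0, u) \<in> E" "lvl u = t"
  shows "\<exists>k\<le>l + 1. (u, w) \<in> EB t ^^ k"
proof -
  obtain p k where p: "(g 0, p) \<in> E" "lvl p = t" "k \<le> l" "(p, w) \<in> EB t ^^ k"
    using run_to_parent[OF assms(1-4)] by auto
  obtain k' where "k' \<le> k + 1" "(u, w) \<in> EB t ^^ k'"
    using parent_switch[of "g 0" t u p w k] assms p by auto
  then show ?thesis using p by (intro exI[of _ k']) auto
qed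

lemma first_descent:
  assumes g: "\<forall>i<j. (g i, g (Suc i)) \<in> EB (Suc t)" "lvl (g 0) = Suc t" "g j < n" "lvl (g j) \<le> t"
  obtains q where "q < j" "\<forall>i\<le>q. g i < n \<and> lvl (g i) = Suc t"
    "\<forall>i<q. (g i, g (Suc i)) \<in> E" "(g q, g (Suc q)) \<in> E" "lvl (g (Suc q)) = t"
proof -
  have in_ball: "g i < n \<and> lvl (g i) \<le> Suc t" if "i \<le> j" for i
  proof (cases "i = j")
    case False
    then show ?thesis using g(1) that unfolding EB_def B_def by auto
  qed (use g in auto)
  define q where "q = (LEAST i. lvl (g i) \<le> t)"
  have q_low: "lvl (g q) \<le> t" unfolding q_def using g(4) by (rule LeastI)
  have before_q: "\<not> lvl (g i) \<le> t" if "i < q" for i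
    using that unfolding q_def by (rule not_less_Least)
  have "q \<le> j" unfolding q_def using g(4) by (rule Least_le)
  have "q \<noteq> 0"
  proof
    assume "q = 0"
    then show False using q_low g(2) by simp
  qed
  then obtain q' where q': "q = Suc q'" using not0_implies_Suc by blast
  have run: "\<forall>i\<le>q'. g i < n \<and> lvl (g i) = Suc t"
  proof (intro allI impI)
    fix i assume "i \<le> q'"
    then have "i < q" "i \<le> j" using q' \<open>q \<le> j\<close> by auto
    then show "g i < n \<and> lvl (g i) = Suc t" using in_ball[of i] before_q[of i] by auto
  qed
  have steps: "(g i, g (Suc i)) \<in> E" if "i \<le> q'" for i
  proof -
    have "i < j" using that q' \<open>q \<le> j\<close> by simp
    then show ?thesis using g(1) EB_sub by blast
  qed
  have "lvl (g q) = t" using q_low lvl_edge'[OF steps[of q']] run q' by auto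
  then show ?thesis using that[of q'] run steps q' \<open>q \<le> j\<close> by auto
qed

text \<open>An excursion to level k+1 is
  a run on level k+1 entered from a parent, and the parent-switching argument replaces
  it by a walk on level k that is not longer.\<close>

lemma ball_convex:
  "(x, y) \<in> E ^^ l \<Longrightarrow> x < n \<Longrightarrow> y < n \<Longrightarrow> lvl x \<le> k \<Longrightarrow> lvl y \<le> k \<Longrightarrow>
    \<exists>j\<le>l. (x, y) \<in> EB k ^^ j"
proof (induction l arbitrary: x y k rule: less_induct)
  case (less l)
  show ?case
  proof (cases l)
    case 0
    then show ?thesis using less.prems(1) by (intro exI[of _ 0]) simp
  next
    case (Suc l')
    have "(x, y) \<in> E ^^ Suc l'" using less.prems(1) unfolding Suc .
    then obtain x1 where x1: "(x, x1) \<in> E" "(x1, y) \<in> E ^^ l'"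
      by (rule relpow_Suc_E2)
    have x1n: "x1 < n" using x1 E_vertices by blast
    show ?thesis
    proof (cases "lvl x1 \<le> k")
      case True
      have "l' < l" using Suc by simp
      then obtain j where j: "j \<le> l'" "(x1, y) \<in> EB k ^^ j"
        using less.IH[OF _ x1(2) x1n less.prems(3) True less.prems(5)] by blast
      have "(x, x1) \<in> EB k" using True x1 x1n less.prems unfolding EB_def B_def by auto
      then have "(x, y) \<in> EB k ^^ Suc j" using j(2) by (rule relpow_Suc_I2)
      then show ?thesis using j(1) Suc by (intro exI[of _ "Suc j"]) simp
    next
      case False
      then have lx1: "lvl x1 = Suc k" "lvl x = k"
        using lvl_edge[OF x1(1)] lvl_edge'[OF x1(1)] less.prems by auto
      have "l' < l" "lvl x1 \<le> Suc k" "lvl y \<le> Suc k" using Suc lx1 less.prems(5) by simp_all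
      then obtain j where j: "j \<le> l'" "(x1, y) \<in> EB (Suc k) ^^ j"
        using less.IH[OF _ x1(2) x1n less.prems(3)] by blast
      then obtain g where g: "g 0 = x1" "g j = y" "\<forall>i<j. (g i, g (Suc i)) \<in> EB (Suc k)"
        by (auto simp: relpow_fun_conv)
      obtain q where q: "q < j" "\<forall>i\<le>q. g i < n \<and> lvl (g i) = Suc k"
          "\<forall>i<q. (g i, g (Suc i)) \<in> E" "(g q, g (Suc q)) \<in> E" "lvl (g (Suc q)) = k"
        using first_descent[of j g k] g lx1 less.prems by auto
      obtain k1 where k1: "k1 \<le> q + 1" "(x, g (Suc q)) \<in> EB k ^^ k1"
        using run_from_any_parent[of q g k "g (Suc q)" x] q g x1 lx1 E_swap by auto
      have "(g (Suc q), y) \<in> EB (Suc k) ^^ (j - Suc q)"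
        using walk_segment[of "Suc q" j g "EB (Suc k)"] g q by auto
      then have "(g (Suc q), y) \<in> E ^^ (j - Suc q)" by (rule EB_relpow)
      moreover have "j - Suc q < l" using Suc j q by simp
      moreover have "g (Suc q) < n" using q E_vertices by blast
      ultimately obtain k2 where k2: "k2 \<le> j - Suc q" "(g (Suc q), y) \<in> EB k ^^ k2"
        using less.IH[OF _ _ _ less.prems(3) _ less.prems(5)] q(5) by blast
      have "(x, y) \<in> EB k ^^ (k1 + k2)" using k1(2) k2(2) by (rule relpow_trans)
      moreover have "k1 + k2 \<le> l" using k1 k2 q j Suc by simp
      ultimately show ?thesis by blast
    qed
  qed
qed

lemma ball_isometric: "x \<in> B k \<Longrightarrow> y \<in> B k \<Longrightarrow> sp_dist (EB k) x y = \<delta> x y"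
proof -
  assume xy: "x \<in> B k" "y \<in> B k"
  then have xy': "x < n" "y < n" "lvl x \<le> k" "lvl y \<le> k" unfolding B_def by auto
  obtain j where j: "j \<le> \<delta> x y" "(x, y) \<in> EB k ^^ j"
    using ball_convex[OF dist_walk[OF xy'(1,2)] xy'] by blast
  then have "sp_dist (EB k) x y \<le> \<delta> x y"
    unfolding sp_dist_def by (meson Least_le le_trans)
  moreover have "(x, y) \<in> EB k ^^ sp_dist (EB k) x y"
    unfolding sp_dist_def using j(2) by (rule LeastI)
  then have "\<delta> x y \<le> sp_dist (EB k) x y" by (intro dist_le EB_relpow)
  ultimately show ?thesis by simp
qed

lemma geodesic_step:
  assumes "x \<in> B k" "y \<in> B k" "\<delta> x y = Suc D"
  shows "\<exists>x'. (x, x') \<in> EB k \<and> \<delta> x' y = D"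
proof -
  have xy: "x < n" "y < n" "lvl x \<le> k" "lvl y \<le> k" using assms unfolding B_def by auto
  obtain j where j: "j \<le> \<delta> x y" "(x, y) \<in> EB k ^^ j"
    using ball_convex[OF dist_walk[OF xy(1,2)] xy] by blast
  have "\<delta> x y \<le> j" using j(2) by (intro dist_le EB_relpow)
  then have jD: "j = Suc D" using j(1) assms(3) by simp
  have "(x, y) \<in> EB k ^^ Suc D" using j(2) unfolding jD .
  then obtain x' where x': "(x, x') \<in> EB k" "(x', y) \<in> EB k ^^ D"
    by (rule relpow_Suc_E2)
  have "\<delta> x' y \<le> D" using x'(2) by (intro dist_le EB_relpow)
  moreover have "Suc D \<le> \<delta> x' y + 1"
    using dist_edge_step[of x' x y] x'(1) EB_sub E_swap xy assms(3) by auto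
  ultimately show ?thesis using x'(1) by (intro exI[of _ x']) auto
qed

lemma geodesic_through_parent:
  assumes v: "v < n" "lvl v = Suc t" and y: "y < n" "lvl y \<le> t"
  shows "\<exists>p. (v, p) \<in> E \<and> lvl p = t \<and> \<delta> v y = Suc (\<delta> p y)"
proof -
  obtain j where j: "j \<le> \<delta> v y" "(v, y) \<in> EB (Suc t) ^^ j"
    using ball_convex[OF dist_walk[OF v(1) y(1)] v(1) y(1)] v y by auto
  then obtain g where g: "g 0 = v" "g j = y" "\<forall>i<j. (g i, g (Suc i)) \<in> EB (Suc t)"
    by (auto simp: relpow_fun_conv)
  obtain q where q: "q < j" "\<forall>i\<le>q. g i < n \<and> lvl (g i) = Suc t"
      "\<forall>i<q. (g i, g (Suc i)) \<in> E" "(g q, g (Suc q)) \<in> E" "lvl (g (Suc q)) = t"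
    using first_descent[of j g t] g v y by auto
  obtain p k1 where p: "(v, p) \<in> E" "lvl p = t" "k1 \<le> q" "(p, g (Suc q)) \<in> EB t ^^ k1"
    using run_to_parent[of q g t "g (Suc q)"] q g by auto
  have "(g (Suc q), y) \<in> EB (Suc t) ^^ (j - Suc q)"
    using walk_segment[of "Suc q" j g "EB (Suc t)"] g q by auto
  then have "(p, y) \<in> E ^^ (k1 + (j - Suc q))"
    using relpow_trans[OF EB_relpow[OF p(4)] EB_relpow] by blast
  then have "\<delta> p y \<le> k1 + (j - Suc q)" by (rule dist_le)
  moreover have "\<delta> v y \<le> \<delta> p y + 1"
    using dist_edge_step[OF E_swap[OF p(1)] y(1)] by simp
  ultimately have "\<delta> v y = Suc (\<delta> p y)" using j p(3) q(1) by linarith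
  then show ?thesis using p by blast
qed

text \<open>A shortest path from the root visits distinct vertices, so all levels are below n.\<close>

lemma lvl_less: "x < n \<Longrightarrow> lvl x < n"
proof -
  assume x: "x < n"
  obtain m f where f: "f 0 = 0" "f m = x" "\<forall>i<m. (f i, f (Suc i)) \<in> E"
      and inj: "\<forall>i\<le>m. \<forall>j\<le>m. f i = f j \<longrightarrow> i = j"
    using induced_path_exists[OF E_sym dist_walk[OF nonempty x]] by metis
  have "(f 0, f m) \<in> E ^^ (m - 0)" by (rule walk_segment) (use f in auto)
  then have "lvl x \<le> m" unfolding lvl_def using f dist_le by simp
  moreover have "inj_on f {0..m}" using inj by (auto intro: inj_onI)
  moreover have "f ` {0..m} \<subseteq> {..<n}"
  proof
    fix y assume "y \<in> f ` {0..m}"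
    then obtain i where i: "i \<le> m" "y = f i" by auto
    show "y \<in> {..<n}"
    proof (cases "i = m")
      case False
      then have "(f i, f (Suc i)) \<in> E" using f i by simp
      then show ?thesis using i E_vertices by auto
    qed (use i f x in simp)
  qed
  ultimately show ?thesis using card_inj_on_le[of f "{0..m}" "{..<n}"] by simp
qed

lemma EB_0: "EB 0 = {}"
proof -
  have "B 0 = {0}" unfolding B_def using lvl_0_root nonempty lvl_root by auto
  then show ?thesis unfolding EB_def using E_irrefl by auto
qed

lemma EB_last: "EB (n - 1) = E"
  unfolding EB_def B_def using E_vertices lvl_less by fastforce

end

subsection \<open>Query programs\<close>

datatype 'a prog = Ret 'a | Query nat nat "nat \<Rightarrow> 'a prog"

primrec pbind :: "'a prog \<Rightarrow> ('a \<Rightarrow> 'b prog) \<Rightarrow> 'b prog" where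
  "pbind (Ret a) f = f a"
| "pbind (Query u v k) f = Query u v (\<lambda>x. pbind (k x) f)"

primrec result :: "'a prog \<Rightarrow> (nat \<Rightarrow> nat \<Rightarrow> nat) \<Rightarrow> 'a" where
  "result (Ret a) d = a"
| "result (Query u v k) d = result (k (d u v)) d"

primrec cost :: "'a prog \<Rightarrow> (nat \<Rightarrow> nat \<Rightarrow> nat) \<Rightarrow> nat" where
  "cost (Ret a) d = 0"
| "cost (Query u v k) d = Suc (cost (k (d u v)) d)"

primrec answers :: "'a prog \<Rightarrow> (nat \<Rightarrow> nat \<Rightarrow> nat) \<Rightarrow> nat list" where
  "answers (Ret a) d = []"
| "answers (Query u v k) d = d u v # answers (k (d u v)) d"

primrec next_action :: "(nat \<times> nat) set prog \<Rightarrow> nat list \<Rightarrow> action" where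
  "next_action (Ret F) hs = Answer F"
| "next_action (Query u v k) hs =
     (case hs of [] \<Rightarrow> Ask u v | a # hs' \<Rightarrow> next_action (k a) hs')"

lemma result_pbind [simp]: "result (pbind p f) d = result (f (result p d)) d"
  by (induction p) auto

lemma cost_pbind [simp]: "cost (pbind p f) d = cost p d + cost (f (result p d)) d"
  by (induction p) auto

lemma length_answers: "length (answers p d) = cost p d"
  by (induction p) auto

lemma next_action_final: "next_action p (answers p d) = Answer (result p d)"
  by (induction p) auto

lemma next_action_prefix:
  "i < cost p d \<Longrightarrow>
    \<exists>u v. next_action p (take i (answers p d)) = Ask u v \<and> answers p d ! i = d u v"
proof (induction p arbitrary: i)
  case (Query u v k)
  show ?case
  proof (cases i)
    case (Suc j)
    then have "j < cost (k (d u v)) d" using Query.prems by simp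
    then show ?thesis using Query.IH[OF rangeI, of j "d u v"] Suc by simp
  qed simp
qed simp

definition strategy_of :: "(nat \<Rightarrow> nat \<Rightarrow> (nat \<times> nat) set prog) \<Rightarrow> strategy" where
  "strategy_of P = (\<lambda>n \<Delta> \<omega> hs. next_action (P n \<Delta>) hs)"

lemma history_strategy_of:
  "i \<le> cost (P n \<Delta>) d \<Longrightarrow> history (strategy_of P) n \<Delta> d \<omega> i = take i (answers (P n \<Delta>) d)"
proof (induction i)
  case (Suc i)
  then have i: "i < cost (P n \<Delta>) d" by simp
  obtain u v where uv: "next_action (P n \<Delta>) (take i (answers (P n \<Delta>) d)) = Ask u v"
      "answers (P n \<Delta>) d ! i = d u v"
    using next_action_prefix[OF i] by blast
  have "history (strategy_of P) n \<Delta> d \<omega> (Suc i) = take i (answers (P n \<Delta>) d) @ [d u v]"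
    using Suc i uv by (simp add: strategy_of_def)
  also have "\<dots> = take (Suc i) (answers (P n \<Delta>) d)"
    using uv i length_answers by (metis take_Suc_conv_app_nth)
  finally show ?case .
qed simp

lemma run_strategy_of:
  "halts (strategy_of P) n \<Delta> d \<omega> \<and> num_queries (strategy_of P) n \<Delta> d \<omega> = cost (P n \<Delta>) d
   \<and> run_output (strategy_of P) n \<Delta> d \<omega> = result (P n \<Delta>) d"
proof -
  let ?A = "strategy_of P" and ?c = "cost (P n \<Delta>) d"
  have "history ?A n \<Delta> d \<omega> ?c = answers (P n \<Delta>) d"
    using history_strategy_of[of ?c P n \<Delta> d \<omega>] by (simp add: length_answers[symmetric])
  then have final: "?A n \<Delta> \<omega> (history ?A n \<Delta> d \<omega> ?c) = Answer (result (P n \<Delta>) d)"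
    using next_action_final by (simp add: strategy_of_def)
  have asking: "\<not> is_answer (?A n \<Delta> \<omega> (history ?A n \<Delta> d \<omega> i))" if i: "i < ?c" for i
  proof -
    obtain u v where "next_action (P n \<Delta>) (take i (answers (P n \<Delta>) d)) = Ask u v"
      using next_action_prefix[OF i] by blast
    then show ?thesis
      using history_strategy_of[of i P n \<Delta> d \<omega>] i by (simp add: strategy_of_def is_answer_def)
  qed
  have "num_queries ?A n \<Delta> d \<omega> = ?c"
    unfolding num_queries_def
  proof (rule Least_equality)
    show "is_answer (?A n \<Delta> \<omega> (history ?A n \<Delta> d \<omega> ?c))"
      using final by (simp add: is_answer_def)
  qed (use asking in \<open>meson not_le\<close>)
  moreover have "halts ?A n \<Delta> d \<omega>"
    unfolding halts_def is_answer_def using final by blast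
  ultimately show ?thesis unfolding run_output_def using final by simp
qed

definition query :: "nat \<Rightarrow> nat \<Rightarrow> nat prog" where "query u v = Query u v Ret"

lemma result_query [simp]: "result (query u v) d = d u v"
  by (simp add: query_def)

lemma cost_query [simp]: "cost (query u v) d = 1"
  by (simp add: query_def)

primrec for_each :: "'a list \<Rightarrow> ('a \<Rightarrow> 'b prog) \<Rightarrow> 'b list prog" where
  "for_each [] f = Ret []"
| "for_each (x # xs) f = pbind (f x) (\<lambda>b. pbind (for_each xs f) (\<lambda>bs. Ret (b # bs)))"

lemma result_for_each [simp]: "result (for_each xs f) d = map (\<lambda>x. result (f x) d) xs"
  by (induction xs) auto

lemma cost_for_each [simp]: "cost (for_each xs f) d = sum_list (map (\<lambda>x. cost (f x) d) xs)"
  by (induction xs) auto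

primrec fold_prog :: "'a list \<Rightarrow> ('a \<Rightarrow> 's \<Rightarrow> 's prog) \<Rightarrow> 's \<Rightarrow> 's prog" where
  "fold_prog [] f s = Ret s"
| "fold_prog (x # xs) f s = pbind (f x s) (\<lambda>s'. fold_prog xs f s')"

subsection \<open>The reconstruction algorithm\<close>

definition set_dist :: "(nat \<times> nat) set \<Rightarrow> nat \<Rightarrow> nat set \<Rightarrow> nat" where
  "set_dist F y Q = Min ((\<lambda>q. sp_dist F y q) ` Q)"

text \<open>A median of S is a known vertex m minimising the total distance to the candidates;
  asking the distances from v to m and its neighbours discards every candidate whose
  predicted distances disagree, and at least half of the candidates are discarded.\<close>

definition score :: "(nat \<times> nat) set \<Rightarrow> nat set set \<Rightarrow> nat \<Rightarrow> nat" where
  "score F S m = (\<Sum>Q\<in>S. set_dist F m Q)"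

definition median :: "(nat \<times> nat) set \<Rightarrow> nat set \<Rightarrow> nat set set \<Rightarrow> nat" where
  "median F X S = (SOME m. m \<in> X \<and> (\<forall>y\<in>X. score F S m \<le> score F S y))"

definition closed_nbh :: "(nat \<times> nat) set \<Rightarrow> nat \<Rightarrow> nat list" where
  "closed_nbh F m = sorted_list_of_set (insert m {y. (m, y) \<in> F})"

definition consistent :: "(nat \<times> nat) set \<Rightarrow> nat list \<Rightarrow> nat list \<Rightarrow> nat set set \<Rightarrow> nat set set" where
  "consistent F ys ds S = {Q \<in> S. list_all2 (\<lambda>y a. Suc (set_dist F y Q) = a) ys ds}"

primrec search :: "nat \<Rightarrow> (nat \<times> nat) set \<Rightarrow> nat set \<Rightarrow> nat \<Rightarrow> nat set set \<Rightarrow> nat set set prog" where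
  "search 0 F X v S = Ret S"
| "search (Suc r) F X v S = (if card S \<le> 1 then Ret S else
     pbind (for_each (closed_nbh F (median F X S)) (\<lambda>y. query v y))
       (\<lambda>ds. search r F X v (consistent F (closed_nbh F (median F X S)) ds S)))"

definition candidates :: "(nat \<Rightarrow> nat) \<Rightarrow> nat \<Rightarrow> nat \<Rightarrow> nat \<Rightarrow> (nat \<times> nat) set \<Rightarrow> nat set set" where
  "candidates lv n \<Delta> t F = {Q. Q \<subseteq> {v. v < n \<and> lv v = t} \<and> Q \<noteq> {} \<and> card Q \<le> \<Delta> \<and>
      (\<forall>a\<in>Q. \<forall>b\<in>Q. a \<noteq> b \<longrightarrow> (a, b) \<in> F)}"

definition clog :: "nat \<Rightarrow> nat" where "clog n = (LEAST k. n + 1 \<le> 2 ^ k)"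

text \<open>Given the parent set of every new vertex, the edges to parents are known, and two
  new vertices can only be adjacent if they share a parent; such pairs are checked by a query.\<close>

definition sharing_pairs :: "(nat \<times> nat set) list \<Rightarrow> (nat \<times> nat) list" where
  "sharing_pairs rs = concat (map (\<lambda>a. map (\<lambda>b. (fst a, fst b))
     (filter (\<lambda>b. fst a \<noteq> fst b \<and> snd a \<inter> snd b \<noteq> {}) rs)) rs)"

definition parent_edges :: "(nat \<times> nat set) list \<Rightarrow> (nat \<times> nat) set" where
  "parent_edges rs = (\<Union>a\<in>set rs. ({fst a} \<times> snd a) \<union> (snd a \<times> {fst a}))"

definition check_edge :: "nat \<times> nat \<Rightarrow> (nat \<times> nat) set prog" where
  "check_edge p = pbind (query (fst p) (snd p)) (\<lambda>a. Ret (if a = 1 then {p} else {}))"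

definition process_level ::
    "nat \<Rightarrow> nat \<Rightarrow> (nat \<Rightarrow> nat) \<Rightarrow> nat \<Rightarrow> (nat \<times> nat) set \<Rightarrow> (nat \<times> nat) set prog" where
  "process_level n \<Delta> lv t F =
     pbind (for_each (sorted_list_of_set {v. v < n \<and> lv v = Suc t})
              (\<lambda>v. pbind (search (\<Delta> * clog n) F {v. v < n \<and> lv v \<le> t} v (candidates lv n \<Delta> t F))
                          (\<lambda>S. Ret (v, \<Union>S))))
       (\<lambda>rs. pbind (for_each (sharing_pairs rs) check_edge)
                  (\<lambda>es. Ret (F \<union> parent_edges rs \<union> \<Union>(set es))))"

definition reconstruct :: "nat \<Rightarrow> nat \<Rightarrow> (nat \<times> nat) set prog" where
  "reconstruct n \<Delta> = (if n \<le> 1 then Ret {} else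
     pbind (for_each [0..<n] (\<lambda>v. query 0 v))
       (\<lambda>ls. fold_prog [0..<n - 1] (\<lambda>t F. process_level n \<Delta> (\<lambda>v. ls ! v) t F) {}))"

lemma process_level_cong:
  assumes "\<forall>v<n. lv v = lv' v"
  shows "process_level n \<Delta> lv t F = process_level n \<Delta> lv' t F"
proof -
  have "{v. v < n \<and> lv v = s} = {v. v < n \<and> lv' v = s}" for s using assms by auto
  moreover have "{v. v < n \<and> lv v \<le> t} = {v. v < n \<and> lv' v \<le> t}" using assms by auto
  ultimately show ?thesis unfolding process_level_def candidates_def by simp
qed

lemma card_small_subsets:
  assumes "finite A"
  shows "card {Q. Q \<subseteq> A \<and> card Q \<le> k} \<le> (card A + 1) ^ k"
proof -
  have eq: "{Q. Q \<subseteq> A \<and> card Q \<le> k} = (\<Union>s\<in>{..k}. {Q. Q \<subseteq> A \<and> card Q = s})" by auto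
  have "card {Q. Q \<subseteq> A \<and> card Q \<le> k} \<le> (\<Sum>s\<in>{..k}. card {Q. Q \<subseteq> A \<and> card Q = s})"
    unfolding eq by (rule card_UN_le) simp
  also have "\<dots> = (\<Sum>s\<in>{..k}. card A choose s)" using n_subsets[OF assms] by simp
  also have "\<dots> \<le> (\<Sum>s\<in>{..k}. (k choose s) * card A ^ s * 1 ^ (k - s))"
  proof (rule sum_mono)
    fix s assume "s \<in> {..k}"
    then have "1 \<le> k choose s" by (simp add: Suc_leI)
    moreover have "card A choose s \<le> card A ^ s"
      by (cases "s \<le> card A") (auto simp: binomial_le_pow binomial_eq_0)
    ultimately have "1 * (card A choose s) \<le> (k choose s) * card A ^ s"
      by (intro mult_le_mono) auto
    then show "card A choose s \<le> (k choose s) * card A ^ s * 1 ^ (k - s)" by simp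
  qed
  also have "\<dots> = (card A + 1) ^ k" using binomial[of "card A" 1 k] by simp
  finally show ?thesis .
qed

text \<open>The halving principle behind the median query: if g exceeds h by at most one on S,
  g is exactly one less than h on S' \<subseteq> S, and the total of h is at most that of g, then S'
  contains at most half of S. (Here h and g are the distances of the candidates from the
  median and from one of its neighbours.)\<close>

lemma halving_count:
  fixes g h :: "'a \<Rightarrow> nat"
  assumes S: "finite S" "S' \<subseteq> S"
    and up: "\<forall>Q\<in>S. g Q \<le> h Q + 1" and down: "\<forall>Q\<in>S'. g Q + 1 = h Q"
    and total: "(\<Sum>Q\<in>S. h Q) \<le> (\<Sum>Q\<in>S. g Q)"
  shows "2 * card S' \<le> card S"
proof -
  have split: "(\<Sum>Q\<in>S. f Q) = (\<Sum>Q\<in>S'. f Q) + (\<Sum>Q\<in>S - S'. f Q)" for f :: "'a \<Rightarrow> nat"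
    using sum.subset_diff[OF S(2,1)] by (simp add: add.commute)
  have "(\<Sum>Q\<in>S. g Q) + card S' = (\<Sum>Q\<in>S'. g Q + 1) + (\<Sum>Q\<in>S - S'. g Q)"
    using split[of g] by (simp add: sum_Suc)
  also have "\<dots> = (\<Sum>Q\<in>S'. h Q) + (\<Sum>Q\<in>S - S'. g Q)"
    using down by simp
  also have "\<dots> \<le> (\<Sum>Q\<in>S'. h Q) + (\<Sum>Q\<in>S - S'. h Q + 1)"
    using up by (intro add_left_mono sum_mono) auto
  also have "\<dots> = (\<Sum>Q\<in>S. h Q) + card (S - S')"
    using split[of h] by (simp add: sum_Suc)
  finally have "card S' \<le> card (S - S')" using total by linarith
  moreover have "card (S - S') = card S - card S'"
    using S by (meson card_Diff_subset finite_subset)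
  moreover have "card S' \<le> card S" using S by (rule card_mono)
  ultimately show ?thesis by linarith
qed

lemma sum_list_le_length_mult:
  "(\<And>x. x \<in> set xs \<Longrightarrow> f x \<le> (K::nat)) \<Longrightarrow> sum_list (map f xs) \<le> length xs * K"
  by (induction xs) fastforce+

lemma clog_covers: "m + 1 \<le> 2 ^ clog m"
proof -
  have "m + 1 \<le> 2 ^ (m + 1)" by (induction m) auto
  then show ?thesis unfolding clog_def by (rule LeastI)
qed

lemma clog_le_log: "1 \<le> n \<Longrightarrow> real (clog n) \<le> log 2 (real n) + 1"
proof (cases "clog n")
  case (Suc c)
  have "c < clog n" using Suc by simp
  then have "\<not> n + 1 \<le> 2 ^ c" unfolding clog_def by (rule not_less_Least)
  then have "2 ^ c \<le> n" by simp
  then have "real c \<le> log 2 (real n)" using le_log2_of_power by blast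
  then show ?thesis using Suc by simp
qed simp

lemma card_le_1_singleton: "finite S \<Longrightarrow> card S \<le> 1 \<Longrightarrow> x \<in> S \<Longrightarrow> S = {x}"
  by (auto simp: card_le_Suc0_iff_eq)

lemma sharing_pairs_map:
  "x \<in> set (sharing_pairs (map (\<lambda>v. (v, f v)) vs)) \<longleftrightarrow>
    fst x \<in> set vs \<and> snd x \<in> set vs \<and> fst x \<noteq> snd x \<and> f (fst x) \<inter> f (snd x) \<noteq> {}"
  unfolding sharing_pairs_def by force

lemma parent_edges_map:
  "(a, b) \<in> parent_edges (map (\<lambda>v. (v, f v)) vs) \<longleftrightarrow>
    (a \<in> set vs \<and> b \<in> f a) \<or> (b \<in> set vs \<and> a \<in> f b)"
  unfolding parent_edges_def by auto

lemma length_sharing_pairs: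
  "length (sharing_pairs rs) =
     sum_list (map (\<lambda>a. length (filter (\<lambda>b. fst a \<noteq> fst b \<and> snd a \<inter> snd b \<noteq> {}) rs)) rs)"
  unfolding sharing_pairs_def by (simp add: length_concat comp_def)

subsection \<open>Correctness and query complexity\<close>

locale bounded_chordal_graph = chordal_graph +
  fixes \<Delta> :: nat
  assumes max_degree: "max_degree_le n E \<Delta>"
begin

lemma neighbours_finite: "finite {y. (m, y) \<in> E}"
  by (rule finite_subset[of _ "{..<n}"]) (auto dest: E_vertices)

lemma degree_le: "card {y. (m, y) \<in> E} \<le> \<Delta>"
proof (cases "m < n")
  case True
  then show ?thesis using max_degree unfolding max_degree_le_def by simp
next
  case False
  then have "{y. (m, y) \<in> E} = {}" by (auto dest: E_vertices)
  then show ?thesis by simp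
qed

lemma subgraph_degree_le: "F \<subseteq> E \<Longrightarrow> card {y. (m, y) \<in> F} \<le> \<Delta>"
  using card_mono[OF neighbours_finite, of "{y. (m, y) \<in> F}" m] degree_le[of m] by fastforce

lemma subgraph_neighbours_finite: "F \<subseteq> E \<Longrightarrow> finite {y. (m, y) \<in> F}"
  using neighbours_finite[of m] by (rule rev_finite_subset) auto

lemma closed_nbh_set: "F \<subseteq> E \<Longrightarrow> set (closed_nbh F m) = insert m {y. (m, y) \<in> F}"
  unfolding closed_nbh_def using subgraph_neighbours_finite[of F m]
  by (simp del: sorted_list_of_set_insert_remove)

lemma closed_nbh_length: "F \<subseteq> E \<Longrightarrow> length (closed_nbh F m) \<le> \<Delta> + 1"
proof -
  assume F: "F \<subseteq> E"
  have "length (closed_nbh F m) = card (insert m {y. (m, y) \<in> F})"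
    unfolding closed_nbh_def by (simp only: length_sorted_list_of_set)
  also have "\<dots> \<le> card {y. (m, y) \<in> F} + 1"
    using subgraph_neighbours_finite[OF F] by (simp add: card_insert_if)
  finally have "length (closed_nbh F m) \<le> card {y. (m, y) \<in> F} + 1" .
  then show ?thesis using subgraph_degree_le[OF F, of m] by simp
qed

lemma search_cost: "F \<subseteq> E \<Longrightarrow> cost (search r F X v S) \<delta> \<le> r * (\<Delta> + 1)"
proof (induction r arbitrary: S)
  case (Suc r)
  let ?ys = "closed_nbh F (median F X S)"
  show ?case
  proof (cases "card S \<le> 1")
    case False
    then have "cost (search (Suc r) F X v S) \<delta>
        = length ?ys + cost (search r F X v (consistent F ?ys (map (\<delta> v) ?ys) S)) \<delta>"
      by (simp add: sum_list_triv)
    also have "\<dots> \<le> (\<Delta> + 1) + r * (\<Delta> + 1)"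
      using closed_nbh_length[OF Suc.prems] Suc.IH[OF Suc.prems] by (meson add_mono)
    finally show ?thesis by simp
  qed simp
qed simp

definition parents :: "nat \<Rightarrow> nat \<Rightarrow> nat set" where
  "parents t v = {p. (v, p) \<in> E \<and> lvl p = t}"

lemma parents_finite: "finite (parents t v)"
  unfolding parents_def by (rule finite_subset[OF _ neighbours_finite[of v]]) blast

lemma parents_nonempty: "v < n \<Longrightarrow> lvl v = Suc t \<Longrightarrow> parents t v \<noteq> {}"
  unfolding parents_def using parent_exists by blast

lemma parents_level: "parents t v \<subseteq> L t"
  unfolding parents_def L_def using E_vertices by fastforce

lemma parents_card: "card (parents t v) \<le> \<Delta>"
  using card_mono[OF neighbours_finite, of "parents t v" v] degree_le[of v]
  unfolding parents_def by fastforce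

lemma set_dist_le: "finite Q \<Longrightarrow> q \<in> Q \<Longrightarrow> set_dist E y Q \<le> \<delta> y q"
  unfolding set_dist_def by simp

lemma set_dist_attained: "finite Q \<Longrightarrow> Q \<noteq> {} \<Longrightarrow> \<exists>q\<in>Q. set_dist E y Q = \<delta> y q"
proof -
  assume "finite Q" "Q \<noteq> {}"
  then have "Min ((\<lambda>q. \<delta> y q) ` Q) \<in> (\<lambda>q. \<delta> y q) ` Q" by (intro Min_in) auto
  then show ?thesis unfolding set_dist_def by auto
qed

lemma set_dist_zero:
  "finite Q \<Longrightarrow> Q \<noteq> {} \<Longrightarrow> Q \<subseteq> {..<n} \<Longrightarrow> y < n \<Longrightarrow> set_dist E y Q = 0 \<longleftrightarrow> y \<in> Q"
  using set_dist_attained[of Q y] set_dist_le[of Q y y] dist_eq_0 dist_self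
  by (metis le_zero_eq lessThan_iff subsetD)

lemma set_dist_edge:
  assumes "(m, x) \<in> E" "Q \<subseteq> {..<n}" "finite Q" "Q \<noteq> {}"
  shows "set_dist E x Q \<le> set_dist E m Q + 1"
proof -
  obtain q where q: "q \<in> Q" "set_dist E m Q = \<delta> m q" using set_dist_attained assms by blast
  have "set_dist E x Q \<le> \<delta> x q" using set_dist_le assms q by blast
  also have "\<dots> \<le> \<delta> m q + 1" using dist_edge_step[OF assms(1)] q assms by blast
  finally show ?thesis using q by simp
qed

lemma set_dist_ball: "Q \<subseteq> B t \<Longrightarrow> y \<in> B t \<Longrightarrow> set_dist (EB t) y Q = set_dist E y Q"
  unfolding set_dist_def using ball_isometric by (intro arg_cong[where f = Min] image_cong) auto

lemma dist_via_parents: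
  assumes v: "v < n" "lvl v = Suc t" and y: "y < n" "lvl y \<le> t"
  shows "\<delta> v y = Suc (set_dist E y (parents t v))"
proof -
  obtain p where p: "(v, p) \<in> E" "lvl p = t" "\<delta> v y = Suc (\<delta> p y)"
    using geodesic_through_parent[OF v y] by blast
  have "p \<in> parents t v" unfolding parents_def using p by simp
  then have "set_dist E y (parents t v) \<le> \<delta> y p" by (rule set_dist_le[OF parents_finite])
  moreover obtain q where q: "q \<in> parents t v" "set_dist E y (parents t v) = \<delta> y q"
    using set_dist_attained[OF parents_finite parents_nonempty[OF v]] by blast
  moreover have "q < n" "(v, q) \<in> E" using q(1) E_vertices unfolding parents_def by auto
  then have "\<delta> v y \<le> Suc (\<delta> y q)"
    using dist_edge_step[OF E_swap[OF \<open>(v, q) \<in> E\<close>] y(1)] dist_sym[of q y] y(1) by simp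
  ultimately show ?thesis using p dist_sym[of p y] y(1) E_vertices[OF p(1)] by simp
qed

abbreviation cands :: "nat \<Rightarrow> nat set set" where
  "cands t \<equiv> candidates lvl n \<Delta> t (EB t)"

lemma candidate_facts:
  assumes "Q \<in> cands t"
  shows "Q \<subseteq> B t" "Q \<noteq> {}" "finite Q" "Q \<subseteq> {..<n}"
    "\<And>a b. a \<in> Q \<Longrightarrow> b \<in> Q \<Longrightarrow> a \<noteq> b \<Longrightarrow> (a, b) \<in> EB t"
proof -
  show Q: "Q \<subseteq> B t" using assms unfolding candidates_def B_def by auto
  then show "Q \<subseteq> {..<n}" unfolding B_def by auto
  then show "finite Q" using finite_subset by blast
qed (use assms in \<open>auto simp: candidates_def\<close>)

lemma parents_candidate: "v < n \<Longrightarrow> lvl v = Suc t \<Longrightarrow> parents t v \<in> cands t"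
proof -
  assume v: "v < n" "lvl v = Suc t"
  have "(a, b) \<in> EB t" if "a \<in> parents t v" "b \<in> parents t v" "a \<noteq> b" for a b
  proof -
    have "(a, b) \<in> E" using parents_adjacent[OF v] that unfolding parents_def by blast
    moreover have "a \<in> B t" "b \<in> B t" using that parents_level unfolding L_def B_def by auto
    ultimately show ?thesis unfolding EB_def by auto
  qed
  then show ?thesis
    using parents_level parents_card parents_nonempty[OF v] unfolding candidates_def L_def by blast
qed

lemma candidate_in_nbh:
  "Q \<in> cands t \<Longrightarrow> m \<in> Q \<Longrightarrow> Q \<subseteq> insert m {y. (m, y) \<in> EB t}"
  using candidate_facts(5) by blast

text \<open>A candidate clique containing m is determined by its distance profile on the closed
  neighbourhood of m: its members are exactly the neighbours at distance zero.\<close>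

lemma candidate_determined_by_profile:
  assumes Q: "Q \<in> cands t" and P: "P \<in> cands t" and m: "m \<in> P"
    and same: "\<forall>y\<in>insert m {y. (m, y) \<in> EB t}. set_dist E y Q = set_dist E y P"
  shows "Q = P"
proof -
  let ?N = "insert m {y. (m, y) \<in> EB t}"
  have zero: "y \<in> X \<longleftrightarrow> set_dist E y X = 0" if "X \<in> cands t" "y \<in> ?N" for X y
  proof -
    have "y < n" using that(2) candidate_facts(4)[OF P] m by (auto simp: EB_def B_def)
    then show ?thesis using set_dist_zero candidate_facts[OF that(1)] by metis
  qed
  have mN: "m \<in> ?N" by simp
  have "m \<in> Q" using zero[OF Q mN] zero[OF P mN] same m by simp
  have QN: "Q \<subseteq> ?N" by (rule candidate_in_nbh[OF Q \<open>m \<in> Q\<close>])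
  have PN: "P \<subseteq> ?N" by (rule candidate_in_nbh[OF P m])
  have "y \<in> Q \<longleftrightarrow> y \<in> P" if "y \<in> ?N" for y
    using zero[OF Q that] zero[OF P that] bspec[OF same that] by simp
  then show ?thesis using QN PN by blast
qed

lemma step_toward_candidate:
  assumes m: "m \<in> B t" and P: "P \<in> cands t" and D: "set_dist E m P = Suc D"
  shows "\<exists>x. (m, x) \<in> EB t \<and> set_dist E x P = D"
proof -
  obtain p where p: "p \<in> P" "set_dist E m P = \<delta> m p"
    using set_dist_attained[OF candidate_facts(3,2)[OF P]] by blast
  obtain x where x: "(m, x) \<in> EB t" "\<delta> x p = D"
    using geodesic_step[of m t p D] m p candidate_facts(1)[OF P] D by auto
  have "set_dist E x P \<le> D"
    using set_dist_le[OF candidate_facts(3)[OF P] p(1), where y = x] x(2) by simp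
  moreover have "set_dist E m P \<le> set_dist E x P + 1"
    using x(1) EB_sub by (intro set_dist_edge[OF E_swap candidate_facts(4,3,2)[OF P]]) blast
  ultimately show ?thesis using x(1) D by auto
qed

lemma search_round_halves:
  assumes v: "v < n" "lvl v = Suc t"
    and S: "S \<subseteq> cands t" "finite S" "2 \<le> card S"
    and m: "m \<in> B t" "\<forall>y\<in>B t. score (EB t) S m \<le> score (EB t) S y"
    and S': "S' = {Q\<in>S. \<forall>y\<in>insert m {y. (m, y) \<in> EB t}. Suc (set_dist (EB t) y Q) = \<delta> v y}"
  shows "2 * card S' \<le> card S"
proof -
  let ?P = "parents t v" and ?N = "insert m {y. (m, y) \<in> EB t}"
  have N_ball: "?N \<subseteq> B t" using m unfolding EB_def by auto
  have P: "?P \<in> cands t" by (rule parents_candidate[OF v])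
  have profile: "set_dist E y Q = set_dist E y ?P" if "Q \<in> S'" "y \<in> ?N" for Q y
  proof -
    have "y \<in> B t" "Q \<in> cands t" using that N_ball S' S(1) by auto
    then have "\<delta> v y = Suc (set_dist E y ?P)" "set_dist (EB t) y Q = set_dist E y Q"
      using dist_via_parents[OF v] set_dist_ball candidate_facts(1) unfolding B_def by auto
    then show ?thesis using that S' by auto
  qed
  have "S' \<subseteq> S" using S' by auto
  show ?thesis
  proof (cases "set_dist E m ?P")
    case 0
    then have "m \<in> ?P"
      using set_dist_zero candidate_facts[OF P] m unfolding B_def by blast
    have "Q = ?P" if Q: "Q \<in> S'" for Q
    proof (rule candidate_determined_by_profile[OF _ P \<open>m \<in> ?P\<close>])
      show "Q \<in> cands t" using Q \<open>S' \<subseteq> S\<close> S(1) by blast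
      show "\<forall>y\<in>?N. set_dist E y Q = set_dist E y ?P" using profile[OF Q] by blast
    qed
    then have "S' \<subseteq> {?P}" by blast
    then have "card S' \<le> 1" using card_mono[of "{?P}" S'] by simp
    then show ?thesis using S(3) by linarith
  next
    case (Suc D)
    then obtain x where x: "(m, x) \<in> EB t" "set_dist E x ?P = D"
      using step_toward_candidate[OF m(1) P] by blast
    have xE: "(m, x) \<in> E" using x EB_sub by blast
    have xN: "x \<in> ?N" using x by simp
    have drop: "\<forall>Q\<in>S'. set_dist E x Q + 1 = set_dist E m Q"
      using profile xN Suc x(2) by simp
    have lipschitz: "\<forall>Q\<in>S. set_dist E x Q \<le> set_dist E m Q + 1"
    proof
      fix Q assume "Q \<in> S"
      then have QC: "Q \<in> cands t" using S(1) by blast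
      show "set_dist E x Q \<le> set_dist E m Q + 1"
        by (rule set_dist_edge[OF xE candidate_facts(4)[OF QC] candidate_facts(3)[OF QC]
              candidate_facts(2)[OF QC]])
    qed
    have score: "score (EB t) S y = (\<Sum>Q\<in>S. set_dist E y Q)" if "y \<in> B t" for y
      unfolding score_def using set_dist_ball that candidate_facts(1) S(1)
      by (intro sum.cong) auto
    have "x \<in> B t" using N_ball xN by blast
    then have "(\<Sum>Q\<in>S. set_dist E m Q) \<le> (\<Sum>Q\<in>S. set_dist E x Q)"
      using bspec[OF m(2)] score[OF m(1)] score[of x] by metis
    then show ?thesis using halving_count[OF S(2) \<open>S' \<subseteq> S\<close> lipschitz drop] by blast
  qed
qed

text \<open>A median exists since the ball contains the root.\<close>

lemma median_minimal:
  "median F (B t) S \<in> B t \<and> (\<forall>y\<in>B t. score F S (median F (B t) S) \<le> score F S y)"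
proof -
  have "0 \<in> B t" unfolding B_def using nonempty lvl_root by simp
  then have "\<exists>x. x \<in> B t \<and> (\<forall>y\<in>B t. score F S x \<le> score F S y)"
    using ex_has_least_nat[of "\<lambda>y. y \<in> B t" 0 "score F S"] by blast
  then show ?thesis unfolding median_def by (rule someI_ex)
qed

lemma consistent_answers:
  "consistent F ys (map (\<delta> v) ys) S = {Q\<in>S. \<forall>y\<in>set ys. Suc (set_dist F y Q) = \<delta> v y}"
  unfolding consistent_def list_all2_map2 list_all2_same by simp

lemma search_finds_parents:
  assumes v: "v < n" "lvl v = Suc t"
  shows "S \<subseteq> cands t \<Longrightarrow> finite S \<Longrightarrow> parents t v \<in> S \<Longrightarrow> card S \<le> 2 ^ r \<Longrightarrow>
     result (search r (EB t) (B t) v S) \<delta> = {parents t v}"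
proof (induction r arbitrary: S)
  case 0
  then show ?case using card_le_1_singleton by simp
next
  case (Suc r)
  show ?case
  proof (cases "card S \<le> 1")
    case True
    then show ?thesis using Suc.prems card_le_1_singleton by simp
  next
    case False
    define m where "m = median (EB t) (B t) S"
    define S' where "S' = {Q\<in>S. \<forall>y\<in>insert m {y. (m, y) \<in> EB t}. Suc (set_dist (EB t) y Q) = \<delta> v y}"
    have m: "m \<in> B t" "\<forall>y\<in>B t. score (EB t) S m \<le> score (EB t) S y"
      using median_minimal unfolding m_def by auto
    have step: "result (search (Suc r) (EB t) (B t) v S) \<delta> = result (search r (EB t) (B t) v S') \<delta>"
      using False by (simp add: consistent_answers closed_nbh_set[OF EB_sub] S'_def m_def)
    have "2 * card S' \<le> card S"
      by (rule search_round_halves[OF v Suc.prems(1,2) _ m S'_def]) (use False in simp)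
    then have "card S' \<le> 2 ^ r" using Suc.prems(4) by simp
    moreover have "parents t v \<in> S'"
    proof -
      have "Suc (set_dist (EB t) y (parents t v)) = \<delta> v y" if "y \<in> insert m {y. (m, y) \<in> EB t}" for y
      proof -
        have y: "y \<in> B t" using that m(1) unfolding EB_def by auto
        have "parents t v \<subseteq> B t" using parents_level unfolding L_def B_def by auto
        then show ?thesis
          using set_dist_ball y dist_via_parents[OF v] unfolding B_def by auto
      qed
      then show ?thesis unfolding S'_def using Suc.prems(3) by blast
    qed
    moreover have "S' \<subseteq> S" unfolding S'_def by auto
    ultimately have "result (search r (EB t) (B t) v S') \<delta> = {parents t v}"
      using Suc.IH[of S'] Suc.prems finite_subset by blast
    then show ?thesis using step by simp
  qed
qed

text \<open>There are at most (n+1)^\<Delta> \<le> 2^(\<Delta> clog n) candidates, so \<Delta> clog n rounds suffice.\<close>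

lemma candidates_finite: "finite (cands t)"
  by (rule finite_subset[of _ "Pow (L t)"]) (auto simp: candidates_def L_def)

lemma candidates_card: "card (cands t) \<le> 2 ^ (\<Delta> * clog n)"
proof -
  have "cands t \<subseteq> {Q. Q \<subseteq> L t \<and> card Q \<le> \<Delta>}" unfolding candidates_def L_def by auto
  moreover have "finite {Q. Q \<subseteq> L t \<and> card Q \<le> \<Delta>}"
    by (rule finite_subset[of _ "Pow (L t)"]) (auto simp: L_def)
  ultimately have "card (cands t) \<le> card {Q. Q \<subseteq> L t \<and> card Q \<le> \<Delta>}" by (rule card_mono[rotated])
  also have "\<dots> \<le> (card (L t) + 1) ^ \<Delta>" by (rule card_small_subsets) (simp add: L_def)
  also have "\<dots> \<le> (n + 1) ^ \<Delta>"
  proof -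
    have "card (L t) \<le> card {..<n}" by (rule card_mono) (auto simp: L_def)
    then show ?thesis by (simp add: power_mono)
  qed
  also have "\<dots> \<le> (2 ^ clog n) ^ \<Delta>" using clog_covers[of n] by (simp add: power_mono)
  also have "\<dots> = 2 ^ (\<Delta> * clog n)" by (simp add: power_mult[symmetric] mult.commute)
  finally show ?thesis .
qed

definition level_parents :: "nat \<Rightarrow> (nat \<times> nat set) list" where
  "level_parents t = map (\<lambda>v. (v, parents t v)) (sorted_list_of_set (L (Suc t)))"

definition find_parents :: "nat \<Rightarrow> nat \<Rightarrow> nat set set prog" where
  "find_parents t v = search (\<Delta> * clog n) (EB t) (B t) v (cands t)"

lemma process_level_unfold:
  "process_level n \<Delta> lvl t (EB t) =
     pbind (for_each (sorted_list_of_set (L (Suc t))) (\<lambda>v. pbind (find_parents t v) (\<lambda>S. Ret (v, \<Union>S))))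
       (\<lambda>rs. pbind (for_each (sharing_pairs rs) check_edge)
                  (\<lambda>es. Ret (EB t \<union> parent_edges rs \<union> \<Union>(set es))))"
proof -
  have "{v. v < n \<and> lvl v = Suc t} = L (Suc t)" "{v. v < n \<and> lvl v \<le> t} = B t"
    unfolding L_def B_def by simp_all
  then show ?thesis unfolding process_level_def find_parents_def by simp
qed

lemma find_parents_result:
  "v \<in> L (Suc t) \<Longrightarrow> result (find_parents t v) \<delta> = {parents t v}"
  unfolding find_parents_def L_def
  by (rule search_finds_parents) (auto simp: candidates_finite candidates_card parents_candidate)

lemma parents_phase_result:
  "result (for_each (sorted_list_of_set (L (Suc t)))
      (\<lambda>v. pbind (find_parents t v) (\<lambda>S. Ret (v, \<Union>S)))) \<delta> = level_parents t"
  unfolding level_parents_def using find_parents_result by (simp add: L_def)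

lemma level_vertex: "v \<in> set (sorted_list_of_set (L (Suc t))) \<longleftrightarrow> v < n \<and> lvl v = Suc t"
  by (simp add: L_def)

lemma sharing_pairs_level:
  "x \<in> set (sharing_pairs (level_parents t)) \<longleftrightarrow> fst x \<noteq> snd x \<and>
    fst x < n \<and> lvl (fst x) = Suc t \<and> snd x < n \<and> lvl (snd x) = Suc t \<and>
    parents t (fst x) \<inter> parents t (snd x) \<noteq> {}"
  unfolding level_parents_def sharing_pairs_map level_vertex by auto

lemma parent_edges_level:
  "(a, b) \<in> parent_edges (level_parents t) \<longleftrightarrow>
    (a < n \<and> lvl a = Suc t \<and> b \<in> parents t a) \<or> (b < n \<and> lvl b = Suc t \<and> a \<in> parents t b)"
  unfolding level_parents_def parent_edges_map level_vertex by auto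

lemma process_level_result:
  "result (process_level n \<Delta> lvl t (EB t)) \<delta> = EB t \<union> parent_edges (level_parents t) \<union>
     {x \<in> set (sharing_pairs (level_parents t)). \<delta> (fst x) (snd x) = 1}"
  unfolding process_level_unfold using parents_phase_result
  by (auto simp: check_edge_def split: if_splits)

text \<open>Soundness and completeness of one level step: it reports exactly the edges of the ball
  of radius t+1. Completeness for two new vertices uses that adjacent vertices on the same
  level share a parent.\<close>

lemma level_edges_sound:
  "EB t \<union> parent_edges (level_parents t) \<union>
     {x \<in> set (sharing_pairs (level_parents t)). \<delta> (fst x) (snd x) = 1} \<subseteq> EB (Suc t)"
proof -
  have "EB t \<subseteq> EB (Suc t)" by (rule EB_mono) simp
  moreover have "parent_edges (level_parents t) \<subseteq> EB (Suc t)"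
  proof (clarify)
    fix a b assume "(a, b) \<in> parent_edges (level_parents t)"
    then show "(a, b) \<in> EB (Suc t)"
      unfolding parent_edges_level parents_def EB_def B_def
      using E_vertices E_swap by auto
  qed
  moreover have "{x \<in> set (sharing_pairs (level_parents t)). \<delta> (fst x) (snd x) = 1} \<subseteq> EB (Suc t)"
    using dist_1_edge unfolding sharing_pairs_level EB_def B_def by auto
  ultimately show ?thesis by blast
qed

lemma level_edges_complete:
  "EB (Suc t) \<subseteq> EB t \<union> parent_edges (level_parents t) \<union>
     {x \<in> set (sharing_pairs (level_parents t)). \<delta> (fst x) (snd x) = 1}"
proof (intro subrelI)
  fix a b assume ab: "(a, b) \<in> EB (Suc t)"
  have e: "(a, b) \<in> E" "a < n" "b < n" "lvl a \<le> Suc t" "lvl b \<le> Suc t"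
    using ab unfolding EB_def B_def by auto
  consider "lvl a \<le> t" "lvl b \<le> t" | "lvl a = Suc t" "lvl b \<le> t"
    | "lvl b = Suc t" "lvl a \<le> t" | "lvl a = Suc t" "lvl b = Suc t"
    using e by linarith
  then show "(a, b) \<in> EB t \<union> parent_edges (level_parents t) \<union>
     {x \<in> set (sharing_pairs (level_parents t)). \<delta> (fst x) (snd x) = 1}"
  proof cases
    case 1
    then have "(a, b) \<in> EB t" using e unfolding EB_def B_def by auto
    then show ?thesis by blast
  next
    case 2
    then have "b \<in> parents t a" using lvl_edge'[OF e(1)] e(1) unfolding parents_def by simp
    then have "(a, b) \<in> parent_edges (level_parents t)" using 2 e unfolding parent_edges_level by blast
    then show ?thesis by blast
  next
    case 3
    then have "a \<in> parents t b" using lvl_edge[OF e(1)] E_swap[OF e(1)] unfolding parents_def by simp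
    then have "(a, b) \<in> parent_edges (level_parents t)" using 3 e unfolding parent_edges_level by blast
    then show ?thesis by blast
  next
    case 4
    obtain c where "(a, c) \<in> E" "(b, c) \<in> E" "lvl c = t"
      using common_parent[OF e(2,3) 4 e(1)] by blast
    then have "c \<in> parents t a \<inter> parents t b" unfolding parents_def by simp
    moreover have "a \<noteq> b" using e(1) E_irrefl by blast
    ultimately have "(a, b) \<in> set (sharing_pairs (level_parents t))"
      using 4 e unfolding sharing_pairs_level by auto
    then show ?thesis using dist_edge[OF e(1)] by simp
  qed
qed

text \<open>A vertex shares a parent with at most \<Delta> * \<Delta> other vertices: they are
  neighbours of its at most \<Delta> parents.\<close>

lemma sharing_partners_sub:
  "{w. u \<noteq> w \<and> parents t u \<inter> parents t w \<noteq> {}} \<subseteq> (\<Union>p\<in>parents t u. {w. (p, w) \<in> E})"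
proof
  fix w assume "w \<in> {w. u \<noteq> w \<and> parents t u \<inter> parents t w \<noteq> {}}"
  then have "parents t u \<inter> parents t w \<noteq> {}" by simp
  then obtain p where "p \<in> parents t u \<inter> parents t w" by (meson all_not_in_conv)
  then have p: "p \<in> parents t u" "p \<in> parents t w" by simp_all
  then have "(p, w) \<in> E" using E_swap[of w p] unfolding parents_def by simp
  then show "w \<in> (\<Union>p\<in>parents t u. {w. (p, w) \<in> E})" using p(1) by blast
qed

lemma sharing_partners_finite: "finite {w. u \<noteq> w \<and> parents t u \<inter> parents t w \<noteq> {}}"
  using sharing_partners_sub by (rule finite_subset) (use parents_finite neighbours_finite in blast)

lemma sharing_partners_card:
  "card {w. u \<noteq> w \<and> parents t u \<inter> parents t w \<noteq> {}} \<le> \<Delta> * \<Delta>"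
proof -
  have "card {w. u \<noteq> w \<and> parents t u \<inter> parents t w \<noteq> {}} \<le> card (\<Union>p\<in>parents t u. {w. (p, w) \<in> E})"
    using sharing_partners_sub by (rule card_mono[rotated]) (use parents_finite neighbours_finite in blast)
  also have "\<dots> \<le> (\<Sum>p\<in>parents t u. card {w. (p, w) \<in> E})" by (rule card_UN_le[OF parents_finite])
  also have "\<dots> \<le> (\<Sum>p\<in>parents t u. \<Delta>)" by (rule sum_mono) (rule degree_le)
  also have "\<dots> = card (parents t u) * \<Delta>" by simp
  also have "\<dots> \<le> \<Delta> * \<Delta>" using parents_card by simp
  finally show ?thesis .
qed

lemma sharing_pairs_length: "length (sharing_pairs (level_parents t)) \<le> card (L (Suc t)) * (\<Delta> * \<Delta>)"
proof -
  let ?vs = "sorted_list_of_set (L (Suc t))"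
  have "length (filter (\<lambda>b. fst a \<noteq> fst b \<and> snd a \<inter> snd b \<noteq> {}) (level_parents t)) \<le> \<Delta> * \<Delta>"
    if a: "a \<in> set (level_parents t)" for a
  proof -
    obtain u where u: "a = (u, parents t u)" using a unfolding level_parents_def by auto
    have "length (filter (\<lambda>b. fst a \<noteq> fst b \<and> snd a \<inter> snd b \<noteq> {}) (level_parents t))
        = length (filter (\<lambda>w. u \<noteq> w \<and> parents t u \<inter> parents t w \<noteq> {}) ?vs)"
      unfolding level_parents_def u by (simp add: filter_map comp_def)
    also have "\<dots> = card ({w. u \<noteq> w \<and> parents t u \<inter> parents t w \<noteq> {}} \<inter> set ?vs)"
      by (simp add: distinct_length_filter)
    also have "\<dots> \<le> card {w. u \<noteq> w \<and> parents t u \<inter> parents t w \<noteq> {}}"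
      by (rule card_mono[OF sharing_partners_finite]) blast
    finally show ?thesis using sharing_partners_card[of u t] by linarith
  qed
  then have "length (sharing_pairs (level_parents t)) \<le> length (level_parents t) * (\<Delta> * \<Delta>)"
    unfolding length_sharing_pairs by (rule sum_list_le_length_mult)
  then show ?thesis by (simp add: level_parents_def L_def)
qed

lemma process_level_cost:
  "cost (process_level n \<Delta> lvl t (EB t)) \<delta> \<le> card (L (Suc t)) * (\<Delta> * clog n * (\<Delta> + 1) + \<Delta> * \<Delta>)"
proof -
  let ?vs = "sorted_list_of_set (L (Suc t))"
  have "sum_list (map (\<lambda>v. cost (find_parents t v) \<delta>) ?vs) \<le> length ?vs * (\<Delta> * clog n * (\<Delta> + 1))"
    by (rule sum_list_le_length_mult) (use search_cost[OF EB_sub] in \<open>simp add: find_parents_def\<close>)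
  then have "cost (process_level n \<Delta> lvl t (EB t)) \<delta> \<le>
      card (L (Suc t)) * (\<Delta> * clog n * (\<Delta> + 1)) + length (sharing_pairs (level_parents t))"
    unfolding process_level_unfold using parents_phase_result
    by (simp add: check_edge_def sum_list_triv L_def)
  then show ?thesis using sharing_pairs_length[of t] by (simp add: algebra_simps)
qed

lemma levels_result_cost:
  "result (fold_prog [s..<s + k] (\<lambda>t F. process_level n \<Delta> lvl t F) (EB s)) \<delta> = EB (s + k) \<and>
   cost (fold_prog [s..<s + k] (\<lambda>t F. process_level n \<Delta> lvl t F) (EB s)) \<delta>
     \<le> (\<Sum>j\<in>{s..<s + k}. card (L (Suc j)) * (\<Delta> * clog n * (\<Delta> + 1) + \<Delta> * \<Delta>))"
proof (induction k arbitrary: s)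
  case (Suc k)
  let ?K = "\<Delta> * clog n * (\<Delta> + 1) + \<Delta> * \<Delta>"
  have steps: "[s..<s + Suc k] = s # [Suc s..<Suc s + k]" by (simp add: upt_conv_Cons)
  have sums: "(\<Sum>j\<in>{s..<s + Suc k}. card (L (Suc j)) * ?K)
      = card (L (Suc s)) * ?K + (\<Sum>j\<in>{Suc s..<Suc s + k}. card (L (Suc j)) * ?K)"
    by (simp add: sum.atLeast_Suc_lessThan)
  have "result (process_level n \<Delta> lvl s (EB s)) \<delta> = EB (Suc s)"
    using process_level_result level_edges_sound level_edges_complete by blast
  then show ?case
    using Suc.IH[of "Suc s"] process_level_cost[of s] unfolding steps sums by simp
qed simp

text \<open>The levels 1, ..., n-1 are disjoint sets of vertices.\<close>

lemma levels_card_sum: "(\<Sum>j\<in>{0..<n - 1}. card (L (Suc j))) \<le> n"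
proof -
  have "(\<Sum>j\<in>{0..<n - 1}. card (L (Suc j))) = card (\<Union>j\<in>{0..<n - 1}. L (Suc j))"
    by (rule card_UN_disjoint[symmetric]) (auto simp: L_def)
  also have "\<dots> \<le> card {..<n}" by (rule card_mono) (auto simp: L_def)
  finally show ?thesis by simp
qed

theorem reconstruct_correct:
  assumes "2 \<le> n"
  shows "result (reconstruct n \<Delta>) \<delta> = E \<and>
    cost (reconstruct n \<Delta>) \<delta> \<le> n + n * (\<Delta> * clog n * (\<Delta> + 1) + \<Delta> * \<Delta>)"
proof -
  let ?K = "\<Delta> * clog n * (\<Delta> + 1) + \<Delta> * \<Delta>"
  define ls where "ls = map (\<lambda>v. \<delta> 0 v) [0..<n]"
  have "\<forall>v<n. ls ! v = lvl v" unfolding ls_def lvl_def by simp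
  then have levels: "(\<lambda>t F. process_level n \<Delta> (\<lambda>v. ls ! v) t F) = (\<lambda>t F. process_level n \<Delta> lvl t F)"
    using process_level_cong[of n "\<lambda>v. ls ! v" lvl] by auto
  have "reconstruct n \<Delta> = pbind (for_each [0..<n] (\<lambda>v. query 0 v))
      (\<lambda>ls. fold_prog [0..<n - 1] (\<lambda>t F. process_level n \<Delta> (\<lambda>v. ls ! v) t F) {})"
    unfolding reconstruct_def using assms by simp
  moreover have "result (for_each [0..<n] (\<lambda>v. query 0 v)) \<delta> = ls" unfolding ls_def by simp
  moreover have "cost (for_each [0..<n] (\<lambda>v. query 0 v)) \<delta> = n" by (simp add: sum_list_triv)
  moreover have "(\<Sum>j\<in>{0..<n - 1}. card (L (Suc j)) * ?K) \<le> n * ?K"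
    using levels_card_sum by (simp add: sum_distrib_right[symmetric] mult_right_mono)
  ultimately show ?thesis
    using levels_result_cost[of 0 "n - 1"] EB_0 EB_last levels by simp
qed
end

text \<open>The arithmetic behind the stated bound, with d = \<Delta>, P = 2^\<Delta>, L = log n and
  c = clog n \<le> L + 1: the algorithm's n(1 + \<Delta>(\<Delta>+1)clog n + \<Delta>^2) queries are at most
  6 n \<Delta>^2 log n, which is dominated by the stated bound.\<close>

lemma query_bound_arith:
  fixes N d P L c :: real
  assumes "0 \<le> N" "1 \<le> d" "1 \<le> P" "1 \<le> L" "0 \<le> c" "c \<le> L + 1"
  shows "N * (1 + (d * c * (d + 1) + d * d)) \<le> 6 * d ^ 3 * P * N * (P + L\<^sup>2) * L"
proof -
  have "d * c * (d + 1) \<le> d * (2 * L) * (2 * d)"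
    using assms by (intro mult_mono) auto
  moreover have dd: "1 \<le> d * d" using assms(2) by (metis mult_mono mult_1 zero_le_one order_trans)
  then have "1 \<le> d * d * L" using assms(4) by (metis mult_mono mult_1 zero_le_one order_trans)
  moreover have "d * d \<le> d * d * L" using assms(4) dd by (simp add: mult_le_cancel_left1)
  ultimately have small: "1 + (d * c * (d + 1) + d * d) \<le> 6 * (d * d * L)"
    by (simp add: algebra_simps)
  have "d * d * 1 \<le> d ^ 3 * (P * (P + L\<^sup>2))"
  proof (intro mult_mono)
    show "d * d \<le> d ^ 3" using assms(2) by (simp add: power3_eq_cube mult_le_cancel_left1)
    have "1 \<le> P + L\<^sup>2" using assms(3) by (simp add: add_increasing2)
    then show "1 \<le> P * (P + L\<^sup>2)" using assms(3) by (metis mult_mono mult_1 zero_le_one order_trans)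
  qed (use assms in auto)
  then have "6 * N * L * (d * d) \<le> 6 * N * L * (d ^ 3 * (P * (P + L\<^sup>2)))"
    using assms by (intro mult_left_mono) auto
  moreover have "N * (1 + (d * c * (d + 1) + d * d)) \<le> N * (6 * (d * d * L))"
    using small assms(1) by (rule mult_left_mono)
  ultimately show ?thesis by (simp add: algebra_simps)
qed

lemma coins_prob_space: "prob_space coins"
  unfolding coins_def by (rule prob_space_PiM) (rule prob_space_measure_pmf)

lemma small_graph_edgeless:
  assumes "simple_graph n E" "n \<le> 1"
  shows "E = {}"
proof (intro equals0I)
  fix e assume "e \<in> E"
  moreover obtain a b where "e = (a, b)" by fastforce
  ultimately have "(a, b) \<in> E" "a < n" "b < n" using assms(1) unfolding simple_graph_def by auto
  then have "a = b" using assms(2) by simp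
  then show False using \<open>(a, b) \<in> E\<close> assms(1) unfolding simple_graph_def irrefl_def by simp
qed

lemma degree_positive:
  assumes "simple_graph n E" "connected_graph n E" "max_degree_le n E \<Delta>" "2 \<le> n"
  shows "1 \<le> \<Delta>"
proof -
  have "(0, 1) \<in> E\<^sup>*" using assms(2,4) unfolding connected_graph_def by auto
  then obtain y where "(0, y) \<in> E"
  proof (rule converse_rtranclE)
    assume "0 = (1::nat)"
    then show ?thesis by simp
  next
    fix y assume "(0, y) \<in> E"
    then show ?thesis by (rule that)
  qed
  moreover have "{y. (0, y) \<in> E} \<subseteq> {0..<n}" using assms(1) unfolding simple_graph_def by auto
  then have "finite {y. (0, y) \<in> E}" by (rule finite_subset) simp
  ultimately have "card {y. (0, y) \<in> E} \<noteq> 0" by auto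
  then have "1 \<le> card {y. (0, y) \<in> E}" by simp
  also have "\<dots> \<le> \<Delta>" using assms(3,4) unfolding max_degree_le_def by auto
  finally show ?thesis .
qed

lemma reconstruct_bound:
  assumes G: "simple_graph n E" "connected_graph n E" "chordal E" "max_degree_le n E \<Delta>"
  shows "result (reconstruct n \<Delta>) (sp_dist E) = E \<and>
    real (cost (reconstruct n \<Delta>) (sp_dist E)) \<le>
      6 * real \<Delta> ^ 3 * 2 ^ \<Delta> * real n * (2 ^ \<Delta> + (log 2 (real n))\<^sup>2) * log 2 (real n)"
proof (cases "n \<le> 1")
  case True
  then have "log 2 (real n) = 0" by (cases n) (auto simp: log_def)
  then show ?thesis using small_graph_edgeless[OF G(1)] True by (simp add: reconstruct_def)
next
  case False
  then have n: "2 \<le> n" by simp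
  interpret bounded_chordal_graph n E \<Delta>
    using G n by unfold_locales auto
  have c: "cost (reconstruct n \<Delta>) \<delta> \<le> n + n * (\<Delta> * clog n * (\<Delta> + 1) + \<Delta> * \<Delta>)"
      "result (reconstruct n \<Delta>) \<delta> = E"
    using reconstruct_correct[OF n] by simp_all
  have "1 \<le> log 2 (real n)" using n by simp
  moreover have "real (clog n) \<le> log 2 (real n) + 1" using n clog_le_log by simp
  ultimately have "real (n + n * (\<Delta> * clog n * (\<Delta> + 1) + \<Delta> * \<Delta>)) \<le>
      6 * real \<Delta> ^ 3 * 2 ^ \<Delta> * real n * (2 ^ \<Delta> + (log 2 (real n))\<^sup>2) * log 2 (real n)"
    using query_bound_arith[of "real n" "real \<Delta>" "2 ^ \<Delta>" "log 2 (real n)" "real (clog n)"]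
      degree_positive[OF G(1,2,4) n] by (simp add: algebra_simps)
  then show ?thesis using c by linarith
qed

theorem theorem3:
  "\<exists>(A :: strategy) (C :: real). C > 0 \<and>
     (\<forall>n \<Delta> E. simple_graph n E \<and> connected_graph n E \<and> chordal E \<and> max_degree_le n E \<Delta> \<longrightarrow>
        query_cost A n \<Delta> (sp_dist E) \<in> borel_measurable coins \<and>
        (AE \<omega> in coins. halts A n \<Delta> (sp_dist E) \<omega> \<and> run_output A n \<Delta> (sp_dist E) \<omega> = E) \<and>
        (\<integral>\<^sup>+ \<omega>. query_cost A n \<Delta> (sp_dist E) \<omega> \<partial>coins) \<le>
          ennreal (C * real \<Delta> ^ 3 * 2 ^ \<Delta> * real n * (2 ^ \<Delta> + (log 2 (real n))\<^sup>2) * log 2 (real n)))"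
proof (intro exI[of _ "strategy_of reconstruct"] exI[of _ 6] conjI allI impI)
  fix n \<Delta> E
  assume "simple_graph n E \<and> connected_graph n E \<and> chordal E \<and> max_degree_le n E \<Delta>"
  then have bound: "result (reconstruct n \<Delta>) (sp_dist E) = E \<and>
      real (cost (reconstruct n \<Delta>) (sp_dist E)) \<le>
        6 * real \<Delta> ^ 3 * 2 ^ \<Delta> * real n * (2 ^ \<Delta> + (log 2 (real n))\<^sup>2) * log 2 (real n)"
    using reconstruct_bound by blast
  let ?A = "strategy_of reconstruct"
  have run: "halts ?A n \<Delta> (sp_dist E) \<omega> \<and> run_output ?A n \<Delta> (sp_dist E) \<omega> = E" for \<omega>
    using run_strategy_of bound by simp
  have cost: "query_cost ?A n \<Delta> (sp_dist E) = (\<lambda>\<omega>. of_nat (cost (reconstruct n \<Delta>) (sp_dist E)))"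
    using run_strategy_of unfolding query_cost_def by auto
  interpret coins: prob_space coins by (rule coins_prob_space)
  show "query_cost ?A n \<Delta> (sp_dist E) \<in> borel_measurable coins" unfolding cost by simp
  show "AE \<omega> in coins. halts ?A n \<Delta> (sp_dist E) \<omega> \<and> run_output ?A n \<Delta> (sp_dist E) \<omega> = E"
    using run by simp
  show "(\<integral>\<^sup>+ \<omega>. query_cost ?A n \<Delta> (sp_dist E) \<omega> \<partial>coins) \<le>
      ennreal (6 * real \<Delta> ^ 3 * 2 ^ \<Delta> * real n * (2 ^ \<Delta> + (log 2 (real n))\<^sup>2) * log 2 (real n))"
    unfolding cost using bound coins.emeasure_space_1
    by (simp add: ennreal_of_nat_eq_real_of_nat ennreal_leI)
qed simp

end
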